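(* Let $X$ be a separable AM-space such that every positive linear functional on $X$ attains its norm (i.e. for each positive $f\in X^*$ there is $x\in X$ with $\|x\|=1$ and $f(x)=\|f\|$). Then $X$ is lattice isometric to $C(K)$ for some compact Hausdorff space $K$.
   Context: An AM-space is a Banach lattice whose norm satisfies $\|x\vee y\|=\max(\|x\|,\|y\|)$ for all $x,y\ge0$. *)

theory Defs
  imports "HOL-Analysis.Analysis"
begin

definition lmod :: "'a::{lattice,uminus} \<Rightarrow> 'a" where
  "lmod x = sup x (- x)"

definition banach_lattice :: "'a::{banach,ordered_real_vector,lattice} itself \<Rightarrow> bool" where
  "banach_lattice _ \<longleftrightarrow> (\<forall>x y::'a. lmod x \<le> lmod y \<longrightarrow> norm x \<le> norm y)"

definition AM_space :: "'a::{banach,ordered_real_vector,lattice} itself \<Rightarrow> bool" where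
  "AM_space T \<longleftrightarrow> banach_lattice T \<and>
     (\<forall>x y::'a. 0 \<le> x \<and> 0 \<le> y \<longrightarrow> norm (sup x y) = max (norm x) (norm y))"

definition separable_type :: "'a::metric_space itself \<Rightarrow> bool" where
  "separable_type _ \<longleftrightarrow> (\<exists>D::'a set. countable D \<and> closure D = UNIV)"

definition positive_dual :: "('a::{real_normed_vector,ord} \<Rightarrow> real) \<Rightarrow> bool" where
  "positive_dual f \<longleftrightarrow> bounded_linear f \<and> (\<forall>x. 0 \<le> x \<longrightarrow> 0 \<le> f x)"

definition attains_norm :: "('a::real_normed_vector \<Rightarrow> real) \<Rightarrow> bool" where
  "attains_norm f \<longleftrightarrow> (\<exists>x. norm x = 1 \<and> f x = onorm f)"

text \<open>C(K) for a topological space K (given as an abstract topology):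
continuous real functions on topspace K, made extensional (0 off topspace K),
with the supremum norm.\<close>

definition CK :: "'b topology \<Rightarrow> ('b \<Rightarrow> real) set" where
  "CK K = {g. continuous_map K euclideanreal g \<and> (\<forall>t. t \<notin> topspace K \<longrightarrow> g t = 0)}"

definition CK_norm :: "'b topology \<Rightarrow> ('b \<Rightarrow> real) \<Rightarrow> real" where
  "CK_norm K g = (if topspace K = {} then 0 else (SUP t\<in>topspace K. \<bar>g t\<bar>))"

definition lattice_isometry_onto_CK :: "('a::{real_normed_vector,lattice} \<Rightarrow> 'b \<Rightarrow> real) \<Rightarrow> 'b topology \<Rightarrow> bool" where
  "lattice_isometry_onto_CK \<Phi> K \<longleftrightarrow>
     bij_betw \<Phi> UNIV (CK K) \<and>
     (\<forall>x y t. \<Phi> (x + y) t = \<Phi> x t + \<Phi> y t) \<and>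
     (\<forall>c x t. \<Phi> (c *\<^sub>R x) t = c * \<Phi> x t) \<and>
     (\<forall>x y t. \<Phi> (sup x y) t = max (\<Phi> x t) (\<Phi> y t)) \<and>
     (\<forall>x y t. \<Phi> (inf x y) t = min (\<Phi> x t) (\<Phi> y t)) \<and>
     (\<forall>x. CK_norm K (\<Phi> x) = norm x)"

end

theory Submission
  imports Defs "HOL-Library.Lattice_Algebras"
begin

text \<open>
  Separability yields a strictly positive functional \<open>F = (\<Sum>n. (1/2)^n * f n)\<close>, where the
  \<open>f n\<close> are positive functionals (obtained by Hahn--Banach) norming the positive parts of a
  dense sequence. If \<open>F\<close> attains its norm at \<open>x\<^sub>0\<close>, then \<open>e = \<bar>x\<^sub>0\<bar>\<close> dominates every positive
  \<open>y\<close> of norm at most \<open>1\<close>: the AM-norm makes \<open>y \<squnion> e\<close> a unit vector, so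
  \<open>F (y \<squnion> e - e) \<le> 0\<close>, and strict positivity forces \<open>y \<le> e\<close>. Thus the unit ball is the order
  interval \<open>[-e, e]\<close>, and Kakutani's argument applies: the real lattice homomorphisms \<open>\<phi>\<close> with
  \<open>\<phi> e = 1\<close> form a weak* compact space \<open>K\<close>; every \<open>x\<close> is normed by some \<open>\<phi> \<in> K\<close>, which is
  obtained from a maximal ideal avoiding \<open>e\<close>; so \<open>x \<mapsto> (\<lambda>\<phi>. \<phi> x)\<close> is a lattice isometry
  into \<open>C(K)\<close>, whose range is dense by the lattice Stone--Weierstrass theorem and closed by
  completeness.
\<close>

section \<open>Vector lattices and lattice norms\<close>

interpretation riesz: lattice_ab_group_add "(+)" "0::'a::{ordered_real_vector,lattice}" "(-)" uminus
  "(\<le>)" "(<)" inf sup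
  by unfold_locales

text \<open>As simplification rules, the interpreted laws pushing \<open>-\<close> through \<open>sup\<close> and \<open>inf\<close>
  make the simplifier loop on the terms below.\<close>

declare riesz.neg_inf_eq_sup [simp del] riesz.neg_sup_eq_inf [simp del]
  riesz.diff_inf_eq_sup [simp del] riesz.diff_sup_eq_inf [simp del]

lemma lmod_ge: "x \<le> lmod x" "- x \<le> lmod (x::'a::{ordered_real_vector,lattice})"
  by (auto simp: lmod_def)

lemma lmod_nonneg: "0 \<le> lmod (x::'a::{ordered_real_vector,lattice})"
proof -
  have "0 \<le> lmod x + lmod x"
    using add_mono[OF lmod_ge] by (metis right_minus)
  then have "0 \<le> (1/2::real) *\<^sub>R (lmod x + lmod x)"
    by (intro scaleR_nonneg_nonneg) auto
  then show ?thesis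
    by (simp flip: scaleR_2)
qed

lemma lmod_eq_self: "0 \<le> x \<Longrightarrow> lmod (x::'a::{ordered_real_vector,lattice}) = x"
  unfolding lmod_def by (rule sup_absorb1) (meson neg_le_0_iff_le order_trans)

lemma lmod_minus [simp]: "lmod (- x) = lmod (x::'a::{ordered_real_vector,lattice})"
  by (simp add: lmod_def sup_commute)

lemma lmod_idem [simp]: "lmod (lmod x) = lmod (x::'a::{ordered_real_vector,lattice})"
  by (simp add: lmod_nonneg lmod_eq_self)

lemma lmod_zero [simp]: "lmod 0 = (0::'a::{ordered_real_vector,lattice})"
  by (simp add: lmod_eq_self)

lemma lmod_eq_zero_iff [simp]: "lmod x = 0 \<longleftrightarrow> x = (0::'a::{ordered_real_vector,lattice})"
  by (metis antisym lmod_ge lmod_zero neg_le_0_iff_le)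

lemma sup_zero_le_lmod: "sup x 0 \<le> lmod (x::'a::{ordered_real_vector,lattice})"
  by (simp add: lmod_ge lmod_nonneg)

lemma lmod_triangle: "lmod (x + y) \<le> lmod x + lmod (y::'a::{ordered_real_vector,lattice})"
proof -
  have "x + y \<le> lmod x + lmod y" "- (x + y) \<le> lmod x + lmod y"
    using add_mono[OF lmod_ge(1) lmod_ge(1)] add_mono[OF lmod_ge(2) lmod_ge(2)]
    by (simp_all add: add.commute)
  then show ?thesis by (simp add: lmod_def)
qed

lemma sup_zero_add_le: "sup (x + y) 0 \<le> sup x 0 + sup (y::'a::{ordered_real_vector,lattice}) 0"
  by (simp add: add_mono add_nonneg_nonneg)

lemma inf_sup_zero_sup_minus_zero: "inf (sup x 0) (sup (- x) 0) = (0::'a::{ordered_real_vector,lattice})"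
proof -
  have "sup x 0 + (- x) = sup (x + - x) (0 + - x)"
    by (rule riesz.add_sup_distrib_right)
  then have "sup (- x) 0 = sup x 0 + (- x)"
    by (simp add: sup_commute)
  then have "inf (sup x 0) (sup (- x) 0) = inf (sup x 0 + 0) (sup x 0 + (- x))"
    by simp
  also have "\<dots> = sup x 0 + inf 0 (- x)"
    by (simp only: riesz.add_inf_distrib_left)
  also have "inf 0 (- x) = - sup x 0"
    by (simp add: riesz.neg_sup_eq_inf inf_commute)
  finally show ?thesis
    by (simp only: right_minus)
qed

lemma scaleR_sup:
  fixes x y :: "'a::{ordered_real_vector,lattice}"
  assumes "0 \<le> c"
  shows "c *\<^sub>R sup x y = sup (c *\<^sub>R x) (c *\<^sub>R y)"
proof (cases "c = 0")
  case False
  with assms have c: "0 < c" by simp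
  let ?S = "sup (c *\<^sub>R x) (c *\<^sub>R y)"
  show ?thesis
  proof (rule antisym)
    have "x \<le> inverse c *\<^sub>R ?S"
      using scaleR_left_mono[OF sup_ge1[of "c *\<^sub>R x" "c *\<^sub>R y"], of "inverse c"] c by simp
    moreover have "y \<le> inverse c *\<^sub>R ?S"
      using scaleR_left_mono[OF sup_ge2[of "c *\<^sub>R y" "c *\<^sub>R x"], of "inverse c"] c by simp
    ultimately have "sup x y \<le> inverse c *\<^sub>R ?S" by simp
    from scaleR_left_mono[OF this assms] c show "c *\<^sub>R sup x y \<le> ?S" by simp
  qed (simp add: assms scaleR_left_mono)
qed simp

lemma scaleR_inf:
  fixes x y :: "'a::{ordered_real_vector,lattice}"
  assumes "0 \<le> c"
  shows "c *\<^sub>R inf x y = inf (c *\<^sub>R x) (c *\<^sub>R y)"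
proof -
  have "c *\<^sub>R inf x y = - (c *\<^sub>R sup (- x) (- y))"
    by (simp only: riesz.inf_eq_neg_sup[of x y] scaleR_minus_right)
  also have "\<dots> = inf (c *\<^sub>R x) (c *\<^sub>R y)"
    by (simp only: scaleR_sup[OF assms] scaleR_minus_right riesz.neg_sup_eq_inf minus_minus)
  finally show ?thesis .
qed

lemma lmod_scaleR_nonneg:
  "0 \<le> c \<Longrightarrow> lmod (c *\<^sub>R x) = c *\<^sub>R lmod (x::'a::{ordered_real_vector,lattice})"
  by (simp add: lmod_def scaleR_sup)

lemma lmod_scaleR: "lmod (c *\<^sub>R x) = \<bar>c\<bar> *\<^sub>R lmod (x::'a::{ordered_real_vector,lattice})"
proof (cases "0 \<le> c")
  case False
  have "lmod (c *\<^sub>R x) = lmod ((- c) *\<^sub>R x)"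
    by (metis lmod_minus scaleR_minus_left)
  with False show ?thesis by (simp add: lmod_scaleR_nonneg del: scaleR_minus_left)
qed (simp add: lmod_scaleR_nonneg)

lemma banach_lattice_norm_le:
  "banach_lattice TYPE('a::{banach,ordered_real_vector,lattice}) \<Longrightarrow> lmod (x::'a) \<le> lmod y \<Longrightarrow> norm x \<le> norm y"
  by (simp add: banach_lattice_def)

lemma banach_lattice_norm_lmod:
  "banach_lattice TYPE('a::{banach,ordered_real_vector,lattice}) \<Longrightarrow> norm (lmod (x::'a)) = norm x"
  by (metis antisym banach_lattice_norm_le lmod_idem order_refl)

lemma banach_lattice_norm_mono:
  "banach_lattice TYPE('a::{banach,ordered_real_vector,lattice}) \<Longrightarrow> 0 \<le> (x::'a) \<Longrightarrow> x \<le> y \<Longrightarrow> norm x \<le> norm y"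
  by (metis banach_lattice_norm_le lmod_eq_self order_trans)

lemma banach_lattice_norm_sup_zero:
  "banach_lattice TYPE('a::{banach,ordered_real_vector,lattice}) \<Longrightarrow> norm (sup (x::'a) 0) \<le> norm x"
  by (metis banach_lattice_norm_le lmod_eq_self sup_zero_le_lmod sup_ge2)

section \<open>Hahn--Banach for sublinear functionals\<close>

lemma subspace_Union_chain:
  assumes "subset.chain A C" "C \<noteq> {}" "\<And>S. S \<in> A \<Longrightarrow> subspace S"
  shows "subspace (\<Union>C)"
  unfolding subspace_def
proof (intro conjI ballI allI)
  have sub: "subspace S" if "S \<in> C" for S
    using assms that by (auto simp: subset_chain_def)
  show "0 \<in> \<Union>C"
    using assms(2) sub subspace_0 by blast
  show "c *\<^sub>R x \<in> \<Union>C" if "x \<in> \<Union>C" for c x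
    using that sub subspace_mul by blast
  show "x + y \<in> \<Union>C" if xy: "x \<in> \<Union>C" "y \<in> \<Union>C" for x y
  proof -
    obtain S where "S \<in> C" "{x, y} \<subseteq> S"
      by (rule finite_subset_Union_chain[of "{x, y}" C A]) (use xy assms(1,2) in auto)
    then show ?thesis using sub subspace_add by blast
  qed
qed

locale sublinear_functional =
  fixes p :: "'a::real_vector \<Rightarrow> real"
  assumes subadditive: "p (x + y) \<le> p x + p y"
    and positively_homogeneous: "0 \<le> c \<Longrightarrow> p (c *\<^sub>R x) = c * p x"
begin

lemma zero [simp]: "p 0 = 0"
  using positively_homogeneous[of 0 0] by simp

lemma scaled_le: "t * p v \<le> p (t *\<^sub>R v)"
proof (cases "0 \<le> t")
  case False
  have "0 \<le> p v + p (- v)"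
    using subadditive[of v "- v"] by simp
  moreover have "p (t *\<^sub>R v) = (- t) * p (- v)"
    using positively_homogeneous[of "- t" "- v"] False by simp
  ultimately show ?thesis
    using False mult_left_mono[of 0 "p v + p (- v)" "- t"] by (simp add: algebra_simps)
qed (simp add: positively_homogeneous)

definition dominated_graph :: "('a \<times> real) set \<Rightarrow> bool" where
  "dominated_graph G \<longleftrightarrow> subspace G \<and> (\<forall>(x, a) \<in> G. a \<le> p x)"

lemma dominated_graph_single_valued:
  assumes "dominated_graph G" "(x, a) \<in> G" "(x, b) \<in> G"
  shows "a = b"
proof -
  have "(x, a) - (x, b) \<in> G" "(x, b) - (x, a) \<in> G"
    using assms subspace_diff unfolding dominated_graph_def by blast+
  then have "a - b \<le> p 0" "b - a \<le> p 0"
    using assms(1) unfolding dominated_graph_def by auto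
  then show ?thesis by simp
qed

lemma dominated_graph_zero: "dominated_graph G \<Longrightarrow> (0, 0) \<in> G"
  unfolding dominated_graph_def zero_prod_def[symmetric] using subspace_0 by blast

lemma dominated_graph_span: "dominated_graph (span {(v, p v)})"
  unfolding dominated_graph_def using subspace_span[of "{(v, p v)}"] scaled_le
  by (auto simp: span_singleton)

lemma dominated_graph_Union_chain:
  assumes "subset.chain A C" "C \<noteq> {}" "\<And>G. G \<in> A \<Longrightarrow> dominated_graph G"
  shows "dominated_graph (\<Union>C)"
proof -
  have "dominated_graph G" if "G \<in> C" for G
    using assms(1,3) that by (auto simp: subset_chain_def)
  then show ?thesis
    using subspace_Union_chain[OF assms(1,2)] assms(3) unfolding dominated_graph_def by fast
qed

text \<open>The one-step extension: the new value \<open>c\<close> at \<open>w\<close> must lie between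
  \<open>b - p (y - w)\<close> and \<open>p (x + w) - a\<close> for all points \<open>(x, a), (y, b)\<close> of the graph,
  and subadditivity of \<open>p\<close> guarantees that this interval is nonempty.\<close>

lemma dominated_graph_extension_value:
  assumes "dominated_graph G"
  obtains c where "\<And>x a. (x, a) \<in> G \<Longrightarrow> c \<le> p (x + w) - a"
    and "\<And>y b. (y, b) \<in> G \<Longrightarrow> b - p (y - w) \<le> c"
proof -
  have G: "subspace G" and dom: "\<And>x a. (x, a) \<in> G \<Longrightarrow> a \<le> p x"
    using assms unfolding dominated_graph_def by auto
  have key: "b - p (y - w) \<le> p (x + w) - a" if "(x, a) \<in> G" "(y, b) \<in> G" for x a y b
  proof -
    have "a + b \<le> p (x + y)"
      using dom subspace_add[OF G that] by simp
    also have "\<dots> \<le> p (x + w) + p (y - w)"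
      using subadditive[of "x + w" "y - w"] by simp
    finally show ?thesis by simp
  qed
  define S where "S = {b - p (y - w) | y b. (y, b) \<in> G}"
  have "(0, 0) \<in> G"
    using assms by (rule dominated_graph_zero)
  then have "S \<noteq> {}" and "bdd_above S"
    using key unfolding S_def bdd_above_def by blast+
  then show thesis
    using key by (intro that[of "Sup S"] cSup_least cSup_upper) (auto simp: S_def)
qed

lemma rescale:
  assumes "0 < s"
  shows "s * (p (inverse s *\<^sub>R x + u) - inverse s * a) = p (x + s *\<^sub>R u) - a"
proof -
  have "s *\<^sub>R (inverse s *\<^sub>R x + u) = x + s *\<^sub>R u"
    using assms by (simp add: scaleR_add_right)
  then have "s * p (inverse s *\<^sub>R x + u) = p (x + s *\<^sub>R u)"
    using positively_homogeneous[of s "inverse s *\<^sub>R x + u"] assms by simp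
  moreover have "s * inverse s = 1"
    using assms by simp
  ultimately show ?thesis
    by (simp add: right_diff_distrib mult.assoc[symmetric])
qed

lemma dominated_graph_extension:
  assumes "dominated_graph G"
  obtains c where "dominated_graph {g + h | g h. g \<in> G \<and> h \<in> span {(w, c)}}"
proof -
  obtain c where c_le: "\<And>x a. (x, a) \<in> G \<Longrightarrow> c \<le> p (x + w) - a"
    and c_ge: "\<And>y b. (y, b) \<in> G \<Longrightarrow> b - p (y - w) \<le> c"
    using dominated_graph_extension_value[OF assms] by blast
  have G: "subspace G"
    using assms unfolding dominated_graph_def by auto
  have "a + t * c \<le> p (x + t *\<^sub>R w)" if "(x, a) \<in> G" for x a t
  proof (cases t "0::real" rule: linorder_cases)
    case less
    define s where "s = - t"
    have s: "0 < s" "t = - s"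
      using less by (simp_all add: s_def)
    have "inverse s *\<^sub>R (x, a) \<in> G"
      using G that subspace_mul by blast
    then have "s * (inverse s * a - p (inverse s *\<^sub>R x - w)) \<le> s * c"
      using c_ge s(1) by (intro mult_left_mono) auto
    moreover have "s * (inverse s * a - p (inverse s *\<^sub>R x - w)) = a - p (x - s *\<^sub>R w)"
      using rescale[of s x "- w" a] s(1) by (simp add: algebra_simps)
    ultimately show ?thesis
      using s(2) by simp
  next
    case equal
    then show ?thesis
      using assms that unfolding dominated_graph_def by auto
  next
    case greater
    have "inverse t *\<^sub>R (x, a) \<in> G"
      using G that subspace_mul by blast
    then have "t * c \<le> t * (p (inverse t *\<^sub>R x + w) - inverse t * a)"
      using c_le greater by (intro mult_left_mono) auto
    then show ?thesis
      using rescale[of t x w a] greater by simp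
  qed
  then have "b \<le> p y" if "(y, b) \<in> {g + h | g h. g \<in> G \<and> h \<in> span {(w, c)}}" for y b
    using that by (auto simp: span_singleton)
  then have "dominated_graph {g + h | g h. g \<in> G \<and> h \<in> span {(w, c)}}"
    unfolding dominated_graph_def using subspace_sums[OF G subspace_span] by blast
  then show thesis by (rule that)
qed

lemma maximal_dominated_graph_total:
  assumes M: "dominated_graph M" and maximal: "\<And>G. dominated_graph G \<Longrightarrow> M \<subseteq> G \<Longrightarrow> G = M"
  shows "\<exists>a. (x, a) \<in> M"
proof -
  obtain c where c: "dominated_graph {g + h | g h. g \<in> M \<and> h \<in> span {(x, c)}}"
    using dominated_graph_extension[OF M] by blast
  define M' where "M' = {g + h | g h. g \<in> M \<and> h \<in> span {(x, c)}}"
  have "M \<subseteq> M'"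
  proof
    fix g
    assume "g \<in> M"
    then have "g + 0 \<in> M'"
      unfolding M'_def using span_zero by blast
    then show "g \<in> M'"
      by simp
  qed
  with c have "M' = M"
    by (intro maximal) (simp_all add: M'_def)
  moreover have "(0, 0) + (x, c) \<in> M'"
    unfolding M'_def using dominated_graph_zero[OF M] span_base[of "(x, c)" "{(x, c)}"] by blast
  then have "(x, c) \<in> M'"
    by simp
  ultimately show ?thesis
    by blast
qed

lemma dominated_graph_total_linear:
  assumes M: "dominated_graph M" and total: "\<And>x. \<exists>a. (x, a) \<in> M"
  obtains f where "linear f" "\<And>x a. (x, a) \<in> M \<longleftrightarrow> a = f x"
proof -
  define f where "f x = (THE a. (x, a) \<in> M)" for x
  have graph: "(x, a) \<in> M \<longleftrightarrow> a = f x" for x a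
  proof -
    obtain b where b: "(x, b) \<in> M"
      using total by blast
    have unique: "c = b" if "(x, c) \<in> M" for c
      using dominated_graph_single_valued[OF M that b] .
    then have "f x = b"
      unfolding f_def using b by (rule the_equality[rotated])
    then show ?thesis
      using b unique by blast
  qed
  have "subspace M"
    using M unfolding dominated_graph_def by blast
  have "linear f"
  proof (rule linearI)
    show "f (x + y) = f x + f y" for x y
      using subspace_add[OF \<open>subspace M\<close>, of "(x, f x)" "(y, f y)"] graph by simp
    show "f (c *\<^sub>R x) = c *\<^sub>R f x" for c x
      using subspace_mul[OF \<open>subspace M\<close>, of "(x, f x)" c] graph by simp
  qed
  from this graph show thesis
    by (rule that)
qed

theorem Hahn_Banach: "\<exists>f. linear f \<and> (\<forall>x. f x \<le> p x) \<and> f v = p v"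
proof -
  let ?A = "{G. dominated_graph G \<and> (v, p v) \<in> G}"
  have "span {(v, p v)} \<in> ?A"
    using dominated_graph_span span_base by blast
  moreover have "\<Union>C \<in> ?A" if "C \<noteq> {}" "subset.chain ?A C" for C
    using dominated_graph_Union_chain[OF that(2,1)] that by (auto simp: subset_chain_def)
  ultimately obtain M where M: "dominated_graph M" "(v, p v) \<in> M"
    and maximal: "\<And>G. dominated_graph G \<Longrightarrow> (v, p v) \<in> G \<Longrightarrow> M \<subseteq> G \<Longrightarrow> G = M"
    using subset_Zorn_nonempty[of ?A] by blast
  have "\<exists>a. (x, a) \<in> M" for x
    using M(2) by (intro maximal_dominated_graph_total[OF M(1)] maximal) auto
  then obtain f where "linear f" and graph: "\<And>x a. (x, a) \<in> M \<longleftrightarrow> a = f x"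
    using dominated_graph_total_linear[OF M(1)] by blast
  moreover have "f x \<le> p x" for x
    using M(1) graph[of x "f x"] unfolding dominated_graph_def by auto
  moreover have "f v = p v"
    using graph M(2) by simp
  ultimately show ?thesis
    by blast
qed

end

section \<open>A strictly positive functional and the order unit\<close>

lemma positive_part_norming_functional:
  fixes x :: "'a::{banach,ordered_real_vector,lattice}"
  assumes BL: "banach_lattice TYPE('a)"
  obtains f where "linear f" "\<And>y. \<bar>f y\<bar> \<le> norm y" "\<And>y. 0 \<le> y \<Longrightarrow> 0 \<le> f y"
    "f x = norm (sup x 0)"
proof -
  interpret sublinear_functional "\<lambda>y::'a. norm (sup y 0)"
  proof
    fix x y :: 'a
    have "norm (sup (x + y) 0) \<le> norm (sup x 0 + sup y 0)"
      using sup_zero_add_le[of x y] by (intro banach_lattice_norm_mono[OF BL]) auto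
    also have "\<dots> \<le> norm (sup x 0) + norm (sup y 0)"
      by (rule norm_triangle_ineq)
    finally show "norm (sup (x + y) 0) \<le> norm (sup x 0) + norm (sup y 0)" .
  next
    fix c :: real and x :: 'a
    assume c: "0 \<le> c"
    have "sup (c *\<^sub>R x) 0 = c *\<^sub>R sup x 0"
      using scaleR_sup[OF c, of x 0] by simp
    with c show "norm (sup (c *\<^sub>R x) 0) = c * norm (sup x 0)"
      by simp
  qed
  obtain f where f: "linear f" "\<And>y. f y \<le> norm (sup y 0)" "f x = norm (sup x 0)"
    using Hahn_Banach[of x] by blast
  have le: "f y \<le> norm y" for y
    using f(2)[of y] banach_lattice_norm_sup_zero[OF BL, of y] by linarith
  have "\<bar>f y\<bar> \<le> norm y" for y
    using le[of y] le[of "- y"] linear_neg[OF f(1), of y] by (simp add: abs_le_iff)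
  moreover have "0 \<le> f y" if "0 \<le> y" for y
  proof -
    have "sup (- y) 0 = 0"
      using that by (simp add: sup_absorb2)
    then show ?thesis
      using f(2)[of "- y"] linear_neg[OF f(1), of y] by simp
  qed
  ultimately show thesis
    using f that by blast
qed

lemma geometric_sum_of_functionals:
  fixes fs :: "nat \<Rightarrow> 'a::real_normed_vector \<Rightarrow> real"
  assumes lin: "\<And>n. linear (fs n)" and bound: "\<And>n y. \<bar>fs n y\<bar> \<le> norm y"
  shows "\<And>y. summable (\<lambda>n. (1/2)^n * fs n y)"
    and "bounded_linear (\<lambda>y. \<Sum>n. (1/2)^n * fs n y)"
proof -
  have geometric: "summable (\<lambda>n. (1/2::real)^n * c)" for c
    by (rule summable_mult2) (rule summable_geometric, simp)
  show summable: "summable (\<lambda>n. (1/2)^n * fs n y)" for y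
    by (rule summable_comparison_test'[OF geometric[of "norm y"]])
      (use bound in \<open>simp add: abs_mult mult_left_mono\<close>)
  define F where "F y = (\<Sum>n. (1/2::real)^n * fs n y)" for y
  have add: "F (x + y) = F x + F y" for x y
    unfolding F_def using suminf_add[OF summable[of x] summable[of y]]
    by (simp add: linear_add[OF lin] distrib_left)
  have scale: "F (c *\<^sub>R x) = c * F x" for c x
    unfolding F_def using suminf_mult[OF summable[of x], of c]
    by (simp add: linear_scale[OF lin] algebra_simps)
  have upper: "F y \<le> 2 * norm y" for y
  proof -
    have "F y \<le> (\<Sum>n. (1/2::real)^n * norm y)"
      unfolding F_def using bound
      by (intro suminf_le[OF _ summable geometric]) (simp add: mult_left_mono abs_le_iff)
    also have "\<dots> = (\<Sum>n. (1/2::real)^n) * norm y"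
      by (rule suminf_mult2[symmetric]) (rule summable_geometric, simp)
    also have "(\<Sum>n. (1/2::real)^n) = 2"
      by (subst suminf_geometric) auto
    finally show ?thesis .
  qed
  have "\<bar>F y\<bar> \<le> 2 * norm y" for y
    using upper[of y] upper[of "- y"] scale[of "- 1" y] by (simp add: abs_le_iff)
  then have "bounded_linear F"
    by (intro bounded_linear_intro[where K = 2]) (auto simp: add scale mult.commute)
  then show "bounded_linear (\<lambda>y. \<Sum>n. (1/2)^n * fs n y)"
    by (simp add: F_def[abs_def])
qed

lemma norm_le_sup_zero_add_dist:
  fixes y z :: "'a::{banach,ordered_real_vector,lattice}"
  assumes BL: "banach_lattice TYPE('a)" and "0 \<le> y"
  shows "norm y \<le> norm (sup z 0) + norm (y - z)"
proof -
  have "y \<le> sup z 0 + sup (y - z) 0"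
    using add_mono[OF sup_ge1[of z 0] sup_ge1[of "y - z" 0]] by simp
  then have "norm y \<le> norm (sup z 0 + sup (y - z) 0)"
    by (rule banach_lattice_norm_mono[OF BL assms(2)])
  also have "\<dots> \<le> norm (sup z 0) + norm (sup (y - z) 0)"
    by (rule norm_triangle_ineq)
  also have "norm (sup (y - z) 0) \<le> norm (y - z)"
    by (rule banach_lattice_norm_sup_zero[OF BL])
  finally show ?thesis by simp
qed

lemma strictly_positive_functional_exists:
  assumes BL: "banach_lattice TYPE('a::{banach,ordered_real_vector,lattice})"
    and sep: "separable_type TYPE('a)"
  shows "\<exists>F::'a \<Rightarrow> real. bounded_linear F \<and> (\<forall>y. 0 \<le> y \<longrightarrow> y \<noteq> 0 \<longrightarrow> 0 < F y)"
proof -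
  obtain D :: "'a set" where D: "countable D" "closure D = UNIV"
    using sep by (auto simp: separable_type_def)
  define d where "d = from_nat_into D"
  have "\<forall>n. \<exists>f. linear f \<and> (\<forall>y. \<bar>f y\<bar> \<le> norm y) \<and> (\<forall>y. 0 \<le> y \<longrightarrow> 0 \<le> f y) \<and>
      f (d n) = norm (sup (d n) 0)"
  proof
    fix n
    show "\<exists>f. linear f \<and> (\<forall>y. \<bar>f y\<bar> \<le> norm y) \<and> (\<forall>y. 0 \<le> y \<longrightarrow> 0 \<le> f y) \<and>
      f (d n) = norm (sup (d n) 0)"
      by (rule positive_part_norming_functional[OF BL, of "d n"]) blast
  qed
  from choice[OF this] obtain fs where "\<forall>n. linear (fs n) \<and> (\<forall>y. \<bar>fs n y\<bar> \<le> norm y) \<and>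
      (\<forall>y. 0 \<le> y \<longrightarrow> 0 \<le> fs n y) \<and> fs n (d n) = norm (sup (d n) 0)"
    by blast
  then have lin: "\<And>n. linear (fs n)" and bound: "\<And>n y. \<bar>fs n y\<bar> \<le> norm y"
    and pos: "\<And>n y. 0 \<le> y \<Longrightarrow> 0 \<le> fs n y" and norming: "\<And>n. fs n (d n) = norm (sup (d n) 0)"
    by auto
  note F = geometric_sum_of_functionals[OF lin bound]
  have "0 < (\<Sum>n. (1/2)^n * fs n y)" if y: "0 \<le> y" "y \<noteq> 0" for y
  proof -
    have "y \<in> closure D" "0 < norm y / 2"
      using D y(2) by simp_all
    then obtain z where z: "z \<in> D" "dist z y < norm y / 2"
      using closure_approachable[of y D] by blast
    then obtain n where n: "d n = z"
      using from_nat_into_surj[OF D(1) z(1)] unfolding d_def by blast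
    have "fs n y = fs n (d n) - fs n (d n - y)"
      using linear_diff[OF lin, of n "d n" "d n - y"] by simp
    moreover have "fs n (d n - y) \<le> norm (y - d n)"
      using bound[of n "d n - y"] norm_minus_commute[of y "d n"] by linarith
    moreover have "norm y \<le> norm (sup (d n) 0) + norm (y - d n)"
      by (rule norm_le_sup_zero_add_dist[OF BL y(1)])
    moreover have "norm (y - d n) < norm y / 2"
      using z n norm_minus_commute[of y z] by (simp add: dist_norm)
    moreover note norming[of n]
    ultimately have "0 < fs n y"
      by linarith
    show ?thesis
      by (rule suminf_pos2[OF F(1)[where y = y], where i = n])
        (use \<open>0 < fs n y\<close> pos y(1) in simp_all)
  qed
  with F(2) show ?thesis
    by (intro exI[of _ "\<lambda>y. \<Sum>n. (1/2)^n * fs n y"]) simp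
qed

lemma AM_space_order_unit:
  fixes F :: "'a::{banach,ordered_real_vector,lattice} \<Rightarrow> real"
  assumes AM: "AM_space TYPE('a)" and F: "bounded_linear F"
    and strict: "\<And>y. 0 \<le> y \<Longrightarrow> y \<noteq> 0 \<Longrightarrow> 0 < F y" and attains: "attains_norm F"
  shows "\<exists>e::'a. norm e = 1 \<and> (\<forall>y. lmod y \<le> norm y *\<^sub>R e)"
proof -
  interpret F: bounded_linear F by (fact F)
  have BL: "banach_lattice TYPE('a)"
    and AM_norm: "\<And>x y::'a. 0 \<le> x \<Longrightarrow> 0 \<le> y \<Longrightarrow> norm (sup x y) = max (norm x) (norm y)"
    using AM by (simp_all add: AM_space_def)
  have pos: "0 \<le> F y" if "0 \<le> y" for y
    using strict[OF that] F.zero by (cases "y = 0") auto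
  have F_le: "F x \<le> onorm F * norm x" for x
    using onorm[OF F, of x] by simp
  obtain x0 where x0: "norm x0 = 1" "F x0 = onorm F"
    using attains unfolding attains_norm_def by blast
  define e where "e = lmod x0"
  have e: "0 \<le> e" "norm e = 1"
    unfolding e_def using lmod_nonneg banach_lattice_norm_lmod[OF BL] x0(1) by auto
  have "F x0 \<le> F e"
    using pos[of "e - x0"] lmod_ge(1)[of x0] F.diff unfolding e_def by simp
  then have F_e: "F e = onorm F"
    using F_le[of e] e x0 by simp
  have below: "y \<le> e" if "0 \<le> y" "norm y \<le> 1" for y
  proof -
    have "norm (sup y e) = 1"
      using AM_norm[OF that(1) e(1)] e(2) that(2) by simp
    then have "F (sup y e - e) \<le> 0"
      using F_le[of "sup y e"] F_e F.diff by simp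
    then have "sup y e - e = 0"
      using strict[of "sup y e - e"] by force
    then show "y \<le> e"
      by (metis eq_iff_diff_eq_0 sup.cobounded1)
  qed
  have "lmod y \<le> norm y *\<^sub>R e" for y
  proof (cases "y = 0")
    case False
    have "(1 / norm y) *\<^sub>R lmod y \<le> e"
      using False by (intro below scaleR_nonneg_nonneg) (simp_all add: lmod_nonneg banach_lattice_norm_lmod[OF BL])
    then have "norm y *\<^sub>R ((1 / norm y) *\<^sub>R lmod y) \<le> norm y *\<^sub>R e"
      by (rule scaleR_left_mono) simp
    with False show ?thesis by simp
  qed simp
  with e(2) show ?thesis
    by blast
qed

section \<open>Lattice ideals\<close>

definition lattice_ideal :: "'a::{ordered_real_vector,lattice} set \<Rightarrow> bool" where
  "lattice_ideal J \<longleftrightarrow> subspace J \<and> (\<forall>x y. y \<in> J \<longrightarrow> lmod x \<le> lmod y \<longrightarrow> x \<in> J)"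

lemma lattice_ideal_solid: "lattice_ideal J \<Longrightarrow> y \<in> J \<Longrightarrow> lmod x \<le> lmod y \<Longrightarrow> x \<in> J"
  by (simp add: lattice_ideal_def)

lemma lattice_ideal_subspace: "lattice_ideal J \<Longrightarrow> subspace J"
  by (simp add: lattice_ideal_def)

lemma lattice_ideal_nonneg_le:
  fixes x y :: "'a::{ordered_real_vector,lattice}"
  assumes "lattice_ideal J" "0 \<le> x" "x \<le> y" "y \<in> J"
  shows "x \<in> J"
  using assms by (intro lattice_ideal_solid[of J y x]) (simp_all add: lmod_eq_self)

lemma lattice_ideal_lmod: "lattice_ideal J \<Longrightarrow> x \<in> J \<Longrightarrow> lmod x \<in> J"
  by (rule lattice_ideal_solid[of J x "lmod x"]) simp_all

lemma lattice_ideal_sup_zero: "lattice_ideal J \<Longrightarrow> x \<in> J \<Longrightarrow> sup x 0 \<in> J"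
  by (rule lattice_ideal_solid[of J x "sup x 0"]) (simp_all add: lmod_eq_self lmod_ge lmod_nonneg)

lemma lattice_ideal_zero: "lattice_ideal {0::'a::{ordered_real_vector,lattice}}"
proof -
  have "x = 0" if "lmod x \<le> lmod 0" for x :: 'a
    using that antisym[OF _ lmod_nonneg[of x]] by simp
  then show ?thesis
    unfolding lattice_ideal_def by (simp add: subspace_single_0)
qed

lemma lattice_ideal_Union_chain:
  assumes "subset.chain A C" "C \<noteq> {}" "\<And>J. J \<in> A \<Longrightarrow> lattice_ideal J"
  shows "lattice_ideal (\<Union>C)"
proof -
  have ideal: "lattice_ideal J" if "J \<in> C" for J
    using assms(1,3) that by (auto simp: subset_chain_def)
  have "subspace (\<Union>C)"
    using subspace_Union_chain[OF assms(1,2)] assms(3) lattice_ideal_subspace by blast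
  moreover have "x \<in> \<Union>C" if y: "y \<in> \<Union>C" and le: "lmod x \<le> lmod y" for x y
  proof -
    obtain J where "J \<in> C" "y \<in> J"
      using y by blast
    then show ?thesis
      using lattice_ideal_solid[OF ideal[OF \<open>J \<in> C\<close>] \<open>y \<in> J\<close> le] by blast
  qed
  ultimately show ?thesis
    by (simp add: lattice_ideal_def)
qed

definition ideal_join :: "'a::{ordered_real_vector,lattice} set \<Rightarrow> 'a \<Rightarrow> 'a set" where
  "ideal_join J u = {w. \<exists>m\<in>J. \<exists>l. lmod w \<le> lmod m + l *\<^sub>R u}"

lemma lattice_ideal_ideal_join:
  assumes J: "lattice_ideal J"
  shows "lattice_ideal (ideal_join J u)"
  unfolding lattice_ideal_def subspace_def
proof (intro conjI ballI allI impI)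
  have J0: "0 \<in> J"
    using subspace_0[OF lattice_ideal_subspace[OF J]] .
  then show "0 \<in> ideal_join J u"
    unfolding ideal_join_def by (auto intro!: bexI[of _ 0] exI[of _ 0])
  show "x + y \<in> ideal_join J u" if xy: "x \<in> ideal_join J u" "y \<in> ideal_join J u" for x y
  proof -
    obtain m1 l1 m2 l2 where m: "m1 \<in> J" "m2 \<in> J"
      and le: "lmod x \<le> lmod m1 + l1 *\<^sub>R u" "lmod y \<le> lmod m2 + l2 *\<^sub>R u"
      using xy unfolding ideal_join_def by blast
    have "lmod (x + y) \<le> (lmod m1 + l1 *\<^sub>R u) + (lmod m2 + l2 *\<^sub>R u)"
      using lmod_triangle[of x y] add_mono[OF le] by (rule order_trans)
    also have "\<dots> = lmod (lmod m1 + lmod m2) + (l1 + l2) *\<^sub>R u"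
      by (simp add: lmod_eq_self lmod_nonneg add_nonneg_nonneg algebra_simps)
    finally have "lmod (x + y) \<le> lmod (lmod m1 + lmod m2) + (l1 + l2) *\<^sub>R u" .
    moreover have "lmod m1 + lmod m2 \<in> J"
      using subspace_add[OF lattice_ideal_subspace[OF J] lattice_ideal_lmod[OF J m(1)]
          lattice_ideal_lmod[OF J m(2)]] .
    ultimately show ?thesis
      unfolding ideal_join_def by blast
  qed
  show "c *\<^sub>R x \<in> ideal_join J u" if x: "x \<in> ideal_join J u" for c x
  proof -
    obtain m l where m: "m \<in> J" and le: "lmod x \<le> lmod m + l *\<^sub>R u"
      using x unfolding ideal_join_def by blast
    have "\<bar>c\<bar> *\<^sub>R lmod x \<le> \<bar>c\<bar> *\<^sub>R (lmod m + l *\<^sub>R u)"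
      using le by (rule scaleR_left_mono) simp
    then have "lmod (c *\<^sub>R x) \<le> lmod (c *\<^sub>R m) + (\<bar>c\<bar> * l) *\<^sub>R u"
      by (simp add: lmod_scaleR scaleR_add_right)
    moreover have "c *\<^sub>R m \<in> J"
      using subspace_mul[OF lattice_ideal_subspace[OF J] m] .
    ultimately show ?thesis
      unfolding ideal_join_def by blast
  qed
  show "x \<in> ideal_join J u" if y: "y \<in> ideal_join J u" and le: "lmod x \<le> lmod y" for x y
  proof -
    obtain m l where "m \<in> J" "lmod y \<le> lmod m + l *\<^sub>R u"
      using y unfolding ideal_join_def by blast
    moreover from le this(2) have "lmod x \<le> lmod m + l *\<^sub>R u"
      by (rule order_trans)
    ultimately show ?thesis
      unfolding ideal_join_def by blast
  qed
qed

lemma subset_ideal_join: "lattice_ideal J \<Longrightarrow> J \<subseteq> ideal_join J u"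
proof
  fix m assume "m \<in> J"
  then show "m \<in> ideal_join J u"
    unfolding ideal_join_def by (intro CollectI bexI[of _ m] exI[of _ 0]) simp_all
qed

lemma mem_ideal_join:
  assumes "lattice_ideal J" "0 \<le> u"
  shows "u \<in> ideal_join J u"
proof -
  have "0 \<in> J"
    using subspace_0[OF lattice_ideal_subspace[OF assms(1)]] .
  moreover have "lmod u \<le> lmod 0 + 1 *\<^sub>R u"
    using assms(2) by (simp add: lmod_eq_self)
  ultimately show ?thesis
    unfolding ideal_join_def by blast
qed

text \<open>The order of the quotient by \<open>J\<close>, expressed on representatives.\<close>

definition ideal_le :: "'a::{ordered_real_vector,lattice} set \<Rightarrow> 'a \<Rightarrow> 'a \<Rightarrow> bool" where
  "ideal_le J x y \<longleftrightarrow> sup (x - y) 0 \<in> J"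

context
  fixes J :: "'a::{ordered_real_vector,lattice} set"
  assumes J: "lattice_ideal J"
begin

lemma ideal_le_of_le: "x \<le> y \<Longrightarrow> ideal_le J x y"
  using subspace_0[OF lattice_ideal_subspace[OF J]] unfolding ideal_le_def
  by (subst sup_absorb2) simp_all

lemma ideal_le_add:
  assumes "ideal_le J a b" "ideal_le J c d"
  shows "ideal_le J (a + c) (b + d)"
proof -
  have "(a + c) - (b + d) = (a - b) + (c - d)"
    by (simp add: algebra_simps)
  then have "sup ((a + c) - (b + d)) 0 \<le> sup (a - b) 0 + sup (c - d) 0"
    using sup_zero_add_le[of "a - b" "c - d"] by (simp only:)
  moreover have "sup (a - b) 0 + sup (c - d) 0 \<in> J"
    using assms subspace_add[OF lattice_ideal_subspace[OF J]] unfolding ideal_le_def by blast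
  ultimately show ?thesis
    unfolding ideal_le_def by (rule lattice_ideal_nonneg_le[OF J sup_ge2])
qed

lemma ideal_le_trans:
  assumes "ideal_le J a b" "ideal_le J b c"
  shows "ideal_le J a c"
proof -
  have "(a + b) - (b + c) = a - c"
    by (simp add: algebra_simps)
  with ideal_le_add[OF assms] show ?thesis
    by (simp only: ideal_le_def)
qed

lemma ideal_le_scaleR:
  assumes "0 \<le> c" "ideal_le J a b"
  shows "ideal_le J (c *\<^sub>R a) (c *\<^sub>R b)"
proof -
  have "c *\<^sub>R sup (a - b) 0 \<in> J"
    using assms(2) subspace_mul[OF lattice_ideal_subspace[OF J]] unfolding ideal_le_def by blast
  moreover have "c *\<^sub>R sup (a - b) 0 = sup (c *\<^sub>R a - c *\<^sub>R b) 0"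
    by (simp only: scaleR_sup[OF assms(1)] scaleR_diff_right scaleR_zero_right)
  ultimately show ?thesis
    by (simp only: ideal_le_def)
qed

lemma ideal_le_minus: "ideal_le J a b \<Longrightarrow> ideal_le J (- b) (- a)"
proof -
  have "- b - - a = a - b"
    by simp
  then show "ideal_le J a b \<Longrightarrow> ideal_le J (- b) (- a)"
    by (simp only: ideal_le_def)
qed

lemma ideal_le_sup:
  assumes "ideal_le J a c" "ideal_le J b c"
  shows "ideal_le J (sup a b) c"
proof -
  let ?R = "sup (a - c) 0 + sup (b - c) 0"
  have nonneg: "0 \<le> sup (a - c) 0" "0 \<le> sup (b - c) 0"
    by (rule sup_ge2)+
  have "a - c \<le> ?R" "b - c \<le> ?R"
    using add_increasing2[OF nonneg(2) sup_ge1] add_increasing[OF nonneg(1) sup_ge1] by auto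
  then have "sup a b \<le> ?R + c"
    by (intro sup_least) (simp_all add: diff_le_eq)
  then have "sup (sup a b - c) 0 \<le> ?R"
    using add_nonneg_nonneg[OF nonneg] by (intro sup_least) (simp_all add: diff_le_eq)
  moreover have "sup (a - c) 0 + sup (b - c) 0 \<in> J"
    using assms subspace_add[OF lattice_ideal_subspace[OF J]] unfolding ideal_le_def by simp
  ultimately show ?thesis
    unfolding ideal_le_def by (rule lattice_ideal_nonneg_le[OF J sup_ge2])
qed

end

section \<open>Real lattice homomorphisms\<close>

locale AM_unit =
  fixes e :: "'a::{banach,ordered_real_vector,lattice}"
  assumes banach_lattice: "banach_lattice TYPE('a)"
    and norm_unit: "norm e = 1"
    and lmod_le_norm_unit: "lmod y \<le> norm y *\<^sub>R e"
begin

lemma unit_nonneg: "0 \<le> e"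
  using lmod_le_norm_unit[of e] lmod_nonneg[of e] norm_unit by simp

lemma le_norm_unit: "y \<le> norm y *\<^sub>R e" "- (norm y *\<^sub>R e) \<le> y"
  using order_trans[OF lmod_ge(1) lmod_le_norm_unit] order_trans[OF lmod_ge(2) lmod_le_norm_unit]
  by (auto simp: minus_le_iff)

lemma norm_le_if_lmod_le:
  assumes "0 \<le> c" "lmod y \<le> c *\<^sub>R e"
  shows "norm y \<le> c"
proof -
  have "lmod (c *\<^sub>R e) = c *\<^sub>R e"
    using assms(1) unit_nonneg by (intro lmod_eq_self scaleR_nonneg_nonneg)
  then have "norm y \<le> norm (c *\<^sub>R e)"
    using assms(2) by (intro banach_lattice_norm_le[OF banach_lattice]) simp
  then show ?thesis
    using assms(1) norm_unit by simp
qed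

definition lattice_homs :: "('a \<Rightarrow> real) set" where
  "lattice_homs = {\<phi>. linear \<phi> \<and> (\<forall>x y. \<phi> (sup x y) = max (\<phi> x) (\<phi> y)) \<and> \<phi> e = 1}"

context
  fixes \<phi> assumes \<phi>: "\<phi> \<in> lattice_homs"
begin

lemma hom_linear: "linear \<phi>"
  using \<phi> by (simp add: lattice_homs_def)

lemma hom_sup: "\<phi> (sup x y) = max (\<phi> x) (\<phi> y)"
  using \<phi> by (simp add: lattice_homs_def)

lemma hom_unit: "\<phi> e = 1"
  using \<phi> by (simp add: lattice_homs_def)

lemma hom_mono: "x \<le> y \<Longrightarrow> \<phi> x \<le> \<phi> y"
  using hom_sup[of x y] by (simp add: sup_absorb2)

lemma hom_inf: "\<phi> (inf x y) = min (\<phi> x) (\<phi> y)"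
proof -
  have "inf x y = x + y - sup x y"
    by (simp only: riesz.add_eq_inf_sup[of x y] add_diff_cancel_left')
  then have "\<phi> (inf x y) = \<phi> x + \<phi> y - \<phi> (sup x y)"
    by (simp only: linear_diff[OF hom_linear] linear_add[OF hom_linear])
  then show ?thesis
    by (simp add: hom_sup min_def max_def)
qed

lemma hom_abs_le_norm: "\<bar>\<phi> x\<bar> \<le> norm x"
proof -
  have "\<phi> (norm x *\<^sub>R e) = norm x"
    using linear_scale[OF hom_linear, of "norm x" e] hom_unit by simp
  then have "\<phi> x \<le> norm x" "- norm x \<le> \<phi> x"
    using hom_mono[OF le_norm_unit(1)[of x]] hom_mono[OF le_norm_unit(2)[of x]]
      linear_neg[OF hom_linear, of "norm x *\<^sub>R e"] by simp_all
  then show ?thesis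
    by (simp add: abs_le_iff)
qed

lemma hom_bounded_linear: "bounded_linear \<phi>"
  using hom_linear hom_abs_le_norm
  by (intro bounded_linear_intro[where K = 1]) (auto simp: linear_add linear_scale)

end

lemma hom_lmod: "\<phi> \<in> lattice_homs \<Longrightarrow> \<phi> (lmod x) = \<bar>\<phi> x\<bar>"
  unfolding lmod_def by (simp add: hom_sup linear_neg[OF hom_linear] abs_if)

end

locale prime_ideal = AM_unit +
  fixes M :: "'a set"
  assumes ideal: "lattice_ideal M"
    and unit_notin: "e \<notin> M"
    and prime: "sup z 0 \<in> M \<or> sup (- z) 0 \<in> M"
begin

lemma ideal_le_total: "ideal_le M x y \<or> ideal_le M y x"
  using prime[of "x - y"] by (simp add: ideal_le_def)

lemma ideal_le_unit_iff: "ideal_le M (a *\<^sub>R e) (b *\<^sub>R e) \<longleftrightarrow> a \<le> b"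
proof
  assume "a \<le> b"
  then show "ideal_le M (a *\<^sub>R e) (b *\<^sub>R e)"
    using unit_nonneg by (intro ideal_le_of_le[OF ideal] scaleR_right_mono)
next
  assume le: "ideal_le M (a *\<^sub>R e) (b *\<^sub>R e)"
  show "a \<le> b"
  proof (rule ccontr)
    assume "\<not> a \<le> b"
    then have "0 \<le> (a - b) *\<^sub>R e"
      using unit_nonneg by (intro scaleR_nonneg_nonneg) simp_all
    then have "(a - b) *\<^sub>R e \<in> M"
      using le by (simp add: ideal_le_def sup_absorb1 scaleR_diff_left)
    then have "inverse (a - b) *\<^sub>R ((a - b) *\<^sub>R e) \<in> M"
      using subspace_mul[OF lattice_ideal_subspace[OF ideal]] by blast
    with \<open>\<not> a \<le> b\<close> unit_notin show False
      by simp
  qed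
qed

text \<open>\<open>represents z a\<close> says that \<open>z\<close> and \<open>a *\<^sub>R e\<close> have the same image in the
  quotient by \<open>M\<close>, which is a totally ordered space in which \<open>e\<close> is an Archimedean unit.\<close>

definition represents :: "'a \<Rightarrow> real \<Rightarrow> bool" where
  "represents z a \<longleftrightarrow> (\<forall>\<epsilon>>0. ideal_le M z ((a + \<epsilon>) *\<^sub>R e) \<and> ideal_le M ((a - \<epsilon>) *\<^sub>R e) z)"

lemma represents_le:
  assumes "represents z a" "represents z b"
  shows "b \<le> a"
proof (rule ccontr)
  assume "\<not> b \<le> a"
  define \<epsilon> where "\<epsilon> = (b - a) / 3"
  have "0 < \<epsilon>" "3 * \<epsilon> = b - a"
    using \<open>\<not> b \<le> a\<close> by (simp_all add: \<epsilon>_def)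
  then have "ideal_le M ((b - \<epsilon>) *\<^sub>R e) z" "ideal_le M z ((a + \<epsilon>) *\<^sub>R e)"
    using assms unfolding represents_def by blast+
  then have "ideal_le M ((b - \<epsilon>) *\<^sub>R e) ((a + \<epsilon>) *\<^sub>R e)"
    by (rule ideal_le_trans[OF ideal])
  then have "b - \<epsilon> \<le> a + \<epsilon>"
    by (simp add: ideal_le_unit_iff)
  with \<open>0 < \<epsilon>\<close> \<open>3 * \<epsilon> = b - a\<close> show False
    by linarith
qed

lemma represents_exists: "\<exists>a. represents z a"
proof -
  define S where "S = {l. ideal_le M z (l *\<^sub>R e)}"
  have "norm z \<in> S"
    using ideal_le_of_le[OF ideal le_norm_unit(1)] by (simp add: S_def)
  then have ne: "S \<noteq> {}"
    by blast
  have lower: "- norm z \<le> l" if "l \<in> S" for l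
  proof -
    have "ideal_le M ((- norm z) *\<^sub>R e) z"
      using ideal_le_of_le[OF ideal le_norm_unit(2)] by simp
    moreover have "ideal_le M z (l *\<^sub>R e)"
      using that by (simp add: S_def)
    ultimately have "ideal_le M ((- norm z) *\<^sub>R e) (l *\<^sub>R e)"
      by (rule ideal_le_trans[OF ideal])
    then show ?thesis
      using ideal_le_unit_iff[of "- norm z" l] by simp
  qed
  then have bdd: "bdd_below S"
    by (rule bdd_belowI)
  have "represents z (Inf S)"
    unfolding represents_def
  proof (intro allI impI conjI)
    fix \<epsilon> :: real
    assume "0 < \<epsilon>"
    then obtain s where "s \<in> S" "s < Inf S + \<epsilon>"
      using cInf_less_iff[OF ne bdd, of "Inf S + \<epsilon>"] by auto
    then have "ideal_le M z (s *\<^sub>R e)" "ideal_le M (s *\<^sub>R e) ((Inf S + \<epsilon>) *\<^sub>R e)"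
      using ideal_le_unit_iff[of s "Inf S + \<epsilon>"] by (simp_all add: S_def)
    then show "ideal_le M z ((Inf S + \<epsilon>) *\<^sub>R e)"
      by (rule ideal_le_trans[OF ideal])
    show "ideal_le M ((Inf S - \<epsilon>) *\<^sub>R e) z"
    proof (rule ccontr)
      assume "\<not> ?thesis"
      then have "Inf S - \<epsilon> \<in> S"
        using ideal_le_total by (auto simp: S_def)
      then have "Inf S \<le> Inf S - \<epsilon>"
        by (rule cInf_lower[OF _ bdd])
      with \<open>0 < \<epsilon>\<close> show False
        by simp
    qed
  qed
  then show ?thesis ..
qed

definition quotient_hom :: "'a \<Rightarrow> real" where
  "quotient_hom z = (THE a. represents z a)"

lemma quotient_hom_eqI: "represents z a \<Longrightarrow> quotient_hom z = a"
  unfolding quotient_hom_def by (rule the_equality) (auto intro: antisym represents_le)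

lemma represents_quotient_hom: "represents z (quotient_hom z)"
  using represents_exists[of z] quotient_hom_eqI by blast

lemma represents_add:
  assumes "represents z a" "represents w b"
  shows "represents (z + w) (a + b)"
  unfolding represents_def
proof (intro allI impI conjI)
  fix \<epsilon> :: real
  assume "0 < \<epsilon>"
  then have "0 < \<epsilon> / 2" by simp
  have "(a + \<epsilon> / 2) *\<^sub>R e + (b + \<epsilon> / 2) *\<^sub>R e = (a + b + \<epsilon>) *\<^sub>R e"
    by (simp add: algebra_simps flip: scaleR_add_left)
  moreover have "(a - \<epsilon> / 2) *\<^sub>R e + (b - \<epsilon> / 2) *\<^sub>R e = (a + b - \<epsilon>) *\<^sub>R e"
    by (simp add: algebra_simps flip: scaleR_add_left)
  moreover have "ideal_le M z ((a + \<epsilon> / 2) *\<^sub>R e)" "ideal_le M w ((b + \<epsilon> / 2) *\<^sub>R e)"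
    "ideal_le M ((a - \<epsilon> / 2) *\<^sub>R e) z" "ideal_le M ((b - \<epsilon> / 2) *\<^sub>R e) w"
    using assms \<open>0 < \<epsilon> / 2\<close> unfolding represents_def by blast+
  then have "ideal_le M (z + w) ((a + \<epsilon> / 2) *\<^sub>R e + (b + \<epsilon> / 2) *\<^sub>R e)"
    "ideal_le M ((a - \<epsilon> / 2) *\<^sub>R e + (b - \<epsilon> / 2) *\<^sub>R e) (z + w)"
    by (simp_all add: ideal_le_add[OF ideal])
  ultimately show "ideal_le M (z + w) ((a + b + \<epsilon>) *\<^sub>R e)"
    "ideal_le M ((a + b - \<epsilon>) *\<^sub>R e) (z + w)"
    by simp_all
qed

lemma represents_scaleR:
  assumes "represents z a" "0 < c"
  shows "represents (c *\<^sub>R z) (c * a)"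
  unfolding represents_def
proof (intro allI impI conjI)
  fix \<epsilon> :: real
  assume "0 < \<epsilon>"
  then have "0 < \<epsilon> / c"
    using assms(2) by simp
  have "c * (a + \<epsilon> / c) = c * a + \<epsilon>" "c * (a - \<epsilon> / c) = c * a - \<epsilon>"
    using assms(2) by (simp_all add: field_simps)
  then have "c *\<^sub>R ((a + \<epsilon> / c) *\<^sub>R e) = (c * a + \<epsilon>) *\<^sub>R e"
    "c *\<^sub>R ((a - \<epsilon> / c) *\<^sub>R e) = (c * a - \<epsilon>) *\<^sub>R e"
    by (simp_all only: scaleR_scaleR)
  moreover have "ideal_le M (c *\<^sub>R z) (c *\<^sub>R ((a + \<epsilon> / c) *\<^sub>R e))"
    "ideal_le M (c *\<^sub>R ((a - \<epsilon> / c) *\<^sub>R e)) (c *\<^sub>R z)"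
    using assms \<open>0 < \<epsilon> / c\<close> ideal_le_scaleR[OF ideal less_imp_le[OF assms(2)]]
    unfolding represents_def by blast+
  ultimately show "ideal_le M (c *\<^sub>R z) ((c * a + \<epsilon>) *\<^sub>R e)"
    "ideal_le M ((c * a - \<epsilon>) *\<^sub>R e) (c *\<^sub>R z)"
    by (simp_all only:)
qed

lemma represents_minus:
  assumes "represents z a"
  shows "represents (- z) (- a)"
  unfolding represents_def
proof (intro allI impI conjI)
  fix \<epsilon> :: real
  assume "0 < \<epsilon>"
  then have "ideal_le M (- z) (- ((a - \<epsilon>) *\<^sub>R e))" "ideal_le M (- ((a + \<epsilon>) *\<^sub>R e)) (- z)"
    using assms ideal_le_minus[OF ideal] unfolding represents_def by blast+
  moreover have "- ((a - \<epsilon>) *\<^sub>R e) = (- a + \<epsilon>) *\<^sub>R e" "- ((a + \<epsilon>) *\<^sub>R e) = (- a - \<epsilon>) *\<^sub>R e"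
    by (simp_all add: algebra_simps)
  ultimately show "ideal_le M (- z) ((- a + \<epsilon>) *\<^sub>R e)" "ideal_le M ((- a - \<epsilon>) *\<^sub>R e) (- z)"
    by (simp_all only:)
qed

lemma represents_sup:
  assumes z: "represents z a" and w: "represents w b"
  shows "represents (sup z w) (max a b)"
  unfolding represents_def
proof (intro allI impI conjI)
  fix \<epsilon> :: real
  assume "0 < \<epsilon>"
  have "ideal_le M z ((a + \<epsilon>) *\<^sub>R e)" "ideal_le M ((a - \<epsilon>) *\<^sub>R e) z"
    "ideal_le M w ((b + \<epsilon>) *\<^sub>R e)" "ideal_le M ((b - \<epsilon>) *\<^sub>R e) w"
    using z w \<open>0 < \<epsilon>\<close> unfolding represents_def by blast+
  moreover have "ideal_le M ((a + \<epsilon>) *\<^sub>R e) ((max a b + \<epsilon>) *\<^sub>R e)"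
    "ideal_le M ((b + \<epsilon>) *\<^sub>R e) ((max a b + \<epsilon>) *\<^sub>R e)"
    by (simp_all add: ideal_le_unit_iff)
  moreover have "ideal_le M z (sup z w)" "ideal_le M w (sup z w)"
    by (simp_all add: ideal_le_of_le[OF ideal])
  ultimately have "ideal_le M z ((max a b + \<epsilon>) *\<^sub>R e)" "ideal_le M w ((max a b + \<epsilon>) *\<^sub>R e)"
    and "ideal_le M ((a - \<epsilon>) *\<^sub>R e) (sup z w)" "ideal_le M ((b - \<epsilon>) *\<^sub>R e) (sup z w)"
    by (meson ideal_le_trans[OF ideal])+
  then show "ideal_le M (sup z w) ((max a b + \<epsilon>) *\<^sub>R e)"
    and "ideal_le M ((max a b - \<epsilon>) *\<^sub>R e) (sup z w)"
    by (auto intro: ideal_le_sup[OF ideal] simp: max_def)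
qed

lemma represents_unit: "represents e 1"
  unfolding represents_def
proof (intro allI impI conjI)
  fix \<epsilon> :: real
  assume "0 < \<epsilon>"
  then show "ideal_le M e ((1 + \<epsilon>) *\<^sub>R e)" "ideal_le M ((1 - \<epsilon>) *\<^sub>R e) e"
    using ideal_le_unit_iff[of 1 "1 + \<epsilon>"] ideal_le_unit_iff[of "1 - \<epsilon>" 1] by simp_all
qed

lemma represents_zero_if_mem:
  assumes "z \<in> M"
  shows "represents z 0"
  unfolding represents_def
proof (intro allI impI conjI)
  fix \<epsilon> :: real
  assume "0 < \<epsilon>"
  then have "0 \<le> \<epsilon> *\<^sub>R e"
    using unit_nonneg by (intro scaleR_nonneg_nonneg) simp_all
  then have "z - \<epsilon> *\<^sub>R e \<le> z" "- \<epsilon> *\<^sub>R e - z \<le> - z"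
    by simp_all
  then have le: "sup (z - \<epsilon> *\<^sub>R e) 0 \<le> sup z 0" "sup (- \<epsilon> *\<^sub>R e - z) 0 \<le> sup (- z) 0"
    by (simp_all add: le_supI1)
  have mem: "sup z 0 \<in> M" "sup (- z) 0 \<in> M"
    using lattice_ideal_sup_zero[OF ideal assms]
      lattice_ideal_sup_zero[OF ideal subspace_neg[OF lattice_ideal_subspace[OF ideal] assms]] .
  have "sup (z - \<epsilon> *\<^sub>R e) 0 \<in> M" "sup (- \<epsilon> *\<^sub>R e - z) 0 \<in> M"
    using lattice_ideal_nonneg_le[OF ideal sup_ge2 le(1) mem(1)]
      lattice_ideal_nonneg_le[OF ideal sup_ge2 le(2) mem(2)] .
  then show "ideal_le M z ((0 + \<epsilon>) *\<^sub>R e)" "ideal_le M ((0 - \<epsilon>) *\<^sub>R e) z"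
    by (simp_all add: ideal_le_def)
qed

lemma quotient_hom_vanishes: "z \<in> M \<Longrightarrow> quotient_hom z = 0"
  by (rule quotient_hom_eqI) (rule represents_zero_if_mem)

lemma quotient_hom_scaleR: "quotient_hom (c *\<^sub>R z) = c * quotient_hom z"
proof (cases c "0::real" rule: linorder_cases)
  case less
  have "represents (- ((- c) *\<^sub>R z)) (- ((- c) * quotient_hom z))"
    using less by (intro represents_minus represents_scaleR represents_quotient_hom) simp
  then show ?thesis
    by (simp add: quotient_hom_eqI)
next
  case equal
  then show ?thesis
    using quotient_hom_vanishes subspace_0[OF lattice_ideal_subspace[OF ideal]] by simp
next
  case greater
  then show ?thesis
    by (intro quotient_hom_eqI represents_scaleR represents_quotient_hom)
qed

theorem quotient_hom_in_lattice_homs: "quotient_hom \<in> lattice_homs"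
proof -
  have "linear quotient_hom"
  proof (rule linearI)
    show "quotient_hom (x + y) = quotient_hom x + quotient_hom y" for x y
      by (intro quotient_hom_eqI represents_add represents_quotient_hom)
  qed (simp add: quotient_hom_scaleR)
  moreover have "quotient_hom (sup x y) = max (quotient_hom x) (quotient_hom y)" for x y
    by (intro quotient_hom_eqI represents_sup represents_quotient_hom)
  moreover have "quotient_hom e = 1"
    by (rule quotient_hom_eqI[OF represents_unit])
  ultimately show ?thesis
    by (simp add: lattice_homs_def)
qed

end

context AM_unit
begin

lemma maximal_ideal_prime:
  assumes M: "lattice_ideal M" "e \<notin> M"
    and maximal: "\<And>J. lattice_ideal J \<Longrightarrow> M \<subseteq> J \<Longrightarrow> e \<notin> J \<Longrightarrow> J = M"
  shows "sup z 0 \<in> M \<or> sup (- z) 0 \<in> M"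
proof (rule ccontr)
  have dominates_unit: "\<exists>m\<in>M. \<exists>l\<ge>0. e \<le> lmod m + l *\<^sub>R u" if "0 \<le> u" "u \<notin> M" for u
  proof -
    have "ideal_join M u \<noteq> M"
      using mem_ideal_join[OF M(1) that(1)] that(2) by blast
    then have "e \<in> ideal_join M u"
      using maximal[OF lattice_ideal_ideal_join[OF M(1)] subset_ideal_join[OF M(1)]] by blast
    then obtain m l where m: "m \<in> M" and le: "e \<le> lmod m + l *\<^sub>R u"
      unfolding ideal_join_def using lmod_eq_self[OF unit_nonneg] by auto
    have "lmod m + l *\<^sub>R u \<le> lmod m + \<bar>l\<bar> *\<^sub>R u"
      using that(1) by (intro add_left_mono scaleR_right_mono) auto
    with le have "e \<le> lmod m + \<bar>l\<bar> *\<^sub>R u"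
      by (rule order_trans)
    with m show ?thesis
      by (intro bexI[of _ m] exI[of _ "\<bar>l\<bar>"]) auto
  qed
  assume "\<not> (sup z 0 \<in> M \<or> sup (- z) 0 \<in> M)"
  then obtain m1 l1 m2 l2 where m: "m1 \<in> M" "m2 \<in> M" and l: "0 \<le> l1" "0 \<le> l2"
    and le: "e \<le> lmod m1 + l1 *\<^sub>R sup z 0" "e \<le> lmod m2 + l2 *\<^sub>R sup (- z) 0"
    using dominates_unit[of "sup z 0"] dominates_unit[of "sup (- z) 0"] by auto
  define P where "P = lmod m1 + lmod m2"
  define \<mu> where "\<mu> = max l1 l2"
  have "lmod m1 + l1 *\<^sub>R sup z 0 \<le> P + \<mu> *\<^sub>R sup z 0"
    "lmod m2 + l2 *\<^sub>R sup (- z) 0 \<le> P + \<mu> *\<^sub>R sup (- z) 0"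
    unfolding P_def \<mu>_def by (intro add_mono scaleR_right_mono; simp add: lmod_nonneg)+
  then have "e \<le> P + \<mu> *\<^sub>R sup z 0" "e \<le> P + \<mu> *\<^sub>R sup (- z) 0"
    using le by (meson order_trans)+
  then have "e \<le> inf (P + \<mu> *\<^sub>R sup z 0) (P + \<mu> *\<^sub>R sup (- z) 0)"
    by simp
  also have "\<dots> = P"
    using l by (simp add: riesz.add_inf_distrib_left[symmetric] scaleR_inf[symmetric]
        inf_sup_zero_sup_minus_zero \<mu>_def)
  finally have "e \<le> P" .
  moreover have "P \<in> M"
    unfolding P_def using subspace_add[OF lattice_ideal_subspace[OF M(1)]]
      lattice_ideal_lmod[OF M(1) m(1)] lattice_ideal_lmod[OF M(1) m(2)] .
  ultimately have "e \<in> M"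
    by (rule lattice_ideal_nonneg_le[OF M(1) unit_nonneg])
  with M(2) show False ..
qed

lemma maximal_ideal_exists:
  assumes "lattice_ideal J" "e \<notin> J"
  obtains M where "J \<subseteq> M" "lattice_ideal M" "e \<notin> M"
    "\<And>I. lattice_ideal I \<Longrightarrow> M \<subseteq> I \<Longrightarrow> e \<notin> I \<Longrightarrow> I = M"
proof -
  let ?A = "{M. lattice_ideal M \<and> J \<subseteq> M \<and> e \<notin> M}"
  have "\<Union>C \<in> ?A" if "C \<noteq> {}" "subset.chain ?A C" for C
    using lattice_ideal_Union_chain[OF that(2,1)] that by (auto simp: subset_chain_def)
  moreover have "J \<in> ?A"
    using assms by simp
  ultimately obtain M where M: "M \<in> ?A" and maximal: "\<forall>I\<in>?A. M \<subseteq> I \<longrightarrow> I = M"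
    using subset_Zorn_nonempty[of ?A] by blast
  show thesis
  proof (rule that)
    show "J \<subseteq> M" "lattice_ideal M" "e \<notin> M"
      using M by simp_all
    show "I = M" if "lattice_ideal I" "M \<subseteq> I" "e \<notin> I" for I
      using maximal that \<open>J \<subseteq> M\<close> by blast
  qed
qed

lemma unit_notin_principal_ideal:
  assumes y: "0 \<le> y" "norm y = 1"
  shows "e \<notin> ideal_join {0} (e - y)"
proof
  assume "e \<in> ideal_join {0} (e - y)"
  then obtain l where l: "e \<le> l *\<^sub>R (e - y)"
    unfolding ideal_join_def using lmod_eq_self[OF unit_nonneg] by auto
  have "y \<le> e"
    using lmod_le_norm_unit[of y] y by (simp add: lmod_eq_self)
  show False
  proof (cases "l \<le> 1")
    case True
    have "l *\<^sub>R (e - y) \<le> 1 *\<^sub>R (e - y)"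
      using True \<open>y \<le> e\<close> by (intro scaleR_right_mono) simp_all
    from order_trans[OF l this] have "y \<le> 0"
      by simp
    with y have "y = 0"
      by simp
    with y show False
      by simp
  next
    case False
    have "l *\<^sub>R y \<le> (l - 1) *\<^sub>R e"
      using l by (simp add: algebra_simps)
    then have "inverse l *\<^sub>R (l *\<^sub>R y) \<le> inverse l *\<^sub>R ((l - 1) *\<^sub>R e)"
      using False by (intro scaleR_left_mono) simp_all
    moreover have "inverse l *\<^sub>R (l *\<^sub>R y) = y"
      using False by simp
    moreover have "inverse l *\<^sub>R ((l - 1) *\<^sub>R e) = ((l - 1) / l) *\<^sub>R e"
      by (simp add: divide_inverse mult.commute)
    ultimately have "y \<le> ((l - 1) / l) *\<^sub>R e"
      by (simp only:)
    then have "lmod y \<le> ((l - 1) / l) *\<^sub>R e"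
      by (simp only: lmod_eq_self[OF y(1)])
    then have "norm y \<le> (l - 1) / l"
      using False by (intro norm_le_if_lmod_le) simp_all
    with False y(2) show False
      by (simp add: field_simps)
  qed
qed

lemma lattice_hom_exists:
  assumes "0 \<le> y" "norm y = 1"
  obtains \<phi> where "\<phi> \<in> lattice_homs" "\<phi> y = 1"
proof -
  have J: "lattice_ideal (ideal_join {0} (e - y))"
    by (rule lattice_ideal_ideal_join[OF lattice_ideal_zero])
  obtain M where M: "ideal_join {0} (e - y) \<subseteq> M" "lattice_ideal M" "e \<notin> M"
    "\<And>I. lattice_ideal I \<Longrightarrow> M \<subseteq> I \<Longrightarrow> e \<notin> I \<Longrightarrow> I = M"
    using maximal_ideal_exists[OF J unit_notin_principal_ideal[OF assms]] by blast
  interpret prime_ideal e M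
    by (intro prime_ideal.intro AM_unit_axioms prime_ideal_axioms.intro M(2,3)
        maximal_ideal_prime[OF M(2,3,4)])
  have "y \<le> e"
    using lmod_le_norm_unit[of y] assms by (simp add: lmod_eq_self)
  then have "e - y \<in> M"
    using M(1) mem_ideal_join[OF lattice_ideal_zero, of "e - y"] by auto
  then have "quotient_hom (e - y) = 0"
    by (rule quotient_hom_vanishes)
  then have "quotient_hom y = 1"
    using linear_diff[OF hom_linear[OF quotient_hom_in_lattice_homs]]
      hom_unit[OF quotient_hom_in_lattice_homs] by simp
  with quotient_hom_in_lattice_homs show thesis
    by (rule that)
qed

end

section \<open>The lattice Stone--Weierstrass theorem\<close>

lemma Max_pointwise_closed:
  assumes "finite T" "T \<noteq> {}" "\<And>t. t \<in> T \<Longrightarrow> h t \<in> L"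
    and max: "\<And>f g. f \<in> L \<Longrightarrow> g \<in> L \<Longrightarrow> (\<lambda>x. max (f x) (g x)) \<in> L"
  shows "(\<lambda>x. Max ((\<lambda>t. h t x) ` T)) \<in> L"
  using assms(1-3)
proof (induction T rule: finite_ne_induct)
  case (singleton t)
  then show ?case by simp
next
  case (insert t T)
  then show ?case
    using max[of "h t" "\<lambda>x. Max ((\<lambda>t. h t x) ` T)"] by simp
qed

lemma Min_pointwise_closed:
  assumes "finite T" "T \<noteq> {}" "\<And>t. t \<in> T \<Longrightarrow> h t \<in> L"
    and min: "\<And>f g. f \<in> L \<Longrightarrow> g \<in> L \<Longrightarrow> (\<lambda>x. min (f x) (g x)) \<in> L"
  shows "(\<lambda>x. Min ((\<lambda>t. h t x) ` T)) \<in> L"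
  using assms(1-3)
proof (induction T rule: finite_ne_induct)
  case (singleton t)
  then show ?case by simp
next
  case (insert t T)
  then show ?case
    using min[of "h t" "\<lambda>x. Min ((\<lambda>t. h t x) ` T)"] by simp
qed

lemma compact_space_pointwise_cover:
  assumes "compact_space X" "topspace X \<noteq> {}"
    and "\<And>t. t \<in> topspace X \<Longrightarrow> openin X (U t)" "\<And>t. t \<in> topspace X \<Longrightarrow> t \<in> U t"
  obtains T where "finite T" "T \<subseteq> topspace X" "T \<noteq> {}" "topspace X \<subseteq> (\<Union>t\<in>T. U t)"
proof -
  have "topspace X \<subseteq> \<Union>(U ` topspace X)"
    using assms(4) by blast
  moreover have "\<forall>V\<in>U ` topspace X. openin X V"
    using assms(3) by blast
  ultimately obtain \<F> where \<F>: "finite \<F>" "\<F> \<subseteq> U ` topspace X" "topspace X \<subseteq> \<Union>\<F>"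
    using assms(1) unfolding compact_space_alt by meson
  then obtain T where T: "T \<subseteq> topspace X" "finite T" "\<F> = U ` T"
    by (meson finite_subset_image)
  with \<F>(3) assms(2) have "T \<noteq> {}"
    by auto
  with T \<F>(3) show thesis
    by (intro that) auto
qed

context
  fixes X :: "'b topology" and L :: "('b \<Rightarrow> real) set" and g :: "'b \<Rightarrow> real"
  assumes compact: "compact_space X" and nonempty: "topspace X \<noteq> {}"
    and continuous: "\<And>h. h \<in> L \<Longrightarrow> continuous_map X euclideanreal h"
    and max_closed: "\<And>f h. f \<in> L \<Longrightarrow> h \<in> L \<Longrightarrow> (\<lambda>x. max (f x) (h x)) \<in> L"
    and min_closed: "\<And>f h. f \<in> L \<Longrightarrow> h \<in> L \<Longrightarrow> (\<lambda>x. min (f x) (h x)) \<in> L"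
    and g_continuous: "continuous_map X euclideanreal g"
    and interpolates: "\<And>s t. s \<in> topspace X \<Longrightarrow> t \<in> topspace X \<Longrightarrow> \<exists>h\<in>L. h s = g s \<and> h t = g t"
begin

lemma openin_less_diff:
  assumes "h \<in> L"
  shows "openin X {x \<in> topspace X. g x - h x < \<epsilon>}" "openin X {x \<in> topspace X. h x - g x < \<epsilon>}"
  using continuous_map_diff[OF g_continuous continuous[OF assms]]
    continuous_map_diff[OF continuous[OF assms] g_continuous]
  by (simp_all add: continuous_map_upper_lower_semicontinuous_lte)

lemma lattice_approximation_from_below:
  assumes "0 < \<epsilon>" "s \<in> topspace X"
  shows "\<exists>h\<in>L. h s = g s \<and> (\<forall>x\<in>topspace X. g x - \<epsilon> < h x)"
proof -
  have "\<forall>t\<in>topspace X. \<exists>h. h \<in> L \<and> h s = g s \<and> h t = g t"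
  proof
    fix t
    assume "t \<in> topspace X"
    from interpolates[OF assms(2) this]
    show "\<exists>h. h \<in> L \<and> h s = g s \<and> h t = g t"
      by (simp only: Bex_def)
  qed
  from bchoice[OF this] obtain k where k: "\<forall>t\<in>topspace X. k t \<in> L \<and> k t s = g s \<and> k t t = g t" ..
  define U where "U t = {x \<in> topspace X. g x - k t x < \<epsilon>}" for t
  have "openin X (U t)" "t \<in> U t" if "t \<in> topspace X" for t
    using openin_less_diff(1)[of "k t" \<epsilon>] k that assms(1) by (simp_all add: U_def)
  then obtain T where T: "finite T" "T \<subseteq> topspace X" "T \<noteq> {}" "topspace X \<subseteq> (\<Union>t\<in>T. U t)"
    by (rule compact_space_pointwise_cover[OF compact nonempty, of U])
  let ?h = "\<lambda>x. Max ((\<lambda>t. k t x) ` T)"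
  have "?h \<in> L"
    using Max_pointwise_closed[OF T(1,3), of k L] T(2) k max_closed by (simp add: subset_iff)
  moreover have "\<forall>t\<in>T. k t s = g s"
    using k T(2) by (simp add: subset_iff)
  then have "?h s = g s"
    using T(1,3) by (intro Max_eqI) auto
  moreover have "g x - \<epsilon> < ?h x" if x: "x \<in> topspace X" for x
  proof -
    obtain t where "t \<in> T" "x \<in> U t"
      using T(4) x by blast
    then have "g x - \<epsilon> < k t x" "k t x \<le> ?h x"
      using T(1) by (auto simp: U_def)
    then show ?thesis
      by linarith
  qed
  ultimately show ?thesis
    by (intro bexI[of _ ?h]) simp_all
qed

theorem lattice_Stone_Weierstrass:
  assumes "0 < \<epsilon>"
  obtains h where "h \<in> L" "\<And>x. x \<in> topspace X \<Longrightarrow> \<bar>h x - g x\<bar> < \<epsilon>"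
proof -
  have "\<forall>s\<in>topspace X. \<exists>h. h \<in> L \<and> h s = g s \<and> (\<forall>x\<in>topspace X. g x - \<epsilon> < h x)"
  proof
    fix s
    assume "s \<in> topspace X"
    from lattice_approximation_from_below[OF assms this]
    show "\<exists>h. h \<in> L \<and> h s = g s \<and> (\<forall>x\<in>topspace X. g x - \<epsilon> < h x)"
      by (simp only: Bex_def)
  qed
  from bchoice[OF this] obtain k where k: "\<forall>s\<in>topspace X.
      k s \<in> L \<and> k s s = g s \<and> (\<forall>x\<in>topspace X. g x - \<epsilon> < k s x)" ..
  define V where "V s = {x \<in> topspace X. k s x - g x < \<epsilon>}" for s
  have "openin X (V s)" "s \<in> V s" if "s \<in> topspace X" for s
    using openin_less_diff(2)[of "k s" \<epsilon>] k that assms by (simp_all add: V_def)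
  then obtain S where S: "finite S" "S \<subseteq> topspace X" "S \<noteq> {}" "topspace X \<subseteq> (\<Union>s\<in>S. V s)"
    by (rule compact_space_pointwise_cover[OF compact nonempty, of V])
  let ?h = "\<lambda>x. Min ((\<lambda>s. k s x) ` S)"
  show thesis
  proof (rule that)
    show "?h \<in> L"
      using Min_pointwise_closed[OF S(1,3), of k L] S(2) k min_closed by (simp add: subset_iff)
    show "\<bar>?h x - g x\<bar> < \<epsilon>" if x: "x \<in> topspace X" for x
    proof -
      obtain s where "s \<in> S" "x \<in> V s"
        using S(4) x by blast
      then have "?h x \<le> k s x" "k s x < g x + \<epsilon>"
        using S(1) by (auto simp: V_def)
      moreover have "\<forall>s'\<in>S. g x - \<epsilon> < k s' x"
        using S(2) k x by blast
      then have "g x - \<epsilon> < ?h x"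
        using S(1,3) by simp
      ultimately show ?thesis
        by (simp add: abs_less_iff)
    qed
  qed
qed

end

section \<open>The Kakutani representation\<close>

context AM_unit
begin

text \<open>The lattice homomorphisms carry the topology of pointwise convergence, inherited from the
  compact box of all functions bounded by the norm (the dual unit ball in the weak* topology).
  Evaluations are extended by \<open>0\<close> off the homomorphisms, as required by \<open>CK\<close>.\<close>

definition norm_box :: "('a \<Rightarrow> real) topology" where
  "norm_box = product_topology (\<lambda>x. subtopology euclideanreal {- norm x..norm x}) UNIV"

definition hom_space :: "('a \<Rightarrow> real) topology" where
  "hom_space = subtopology norm_box lattice_homs"

definition evaluation :: "'a \<Rightarrow> ('a \<Rightarrow> real) \<Rightarrow> real" where
  "evaluation x \<phi> = (if \<phi> \<in> lattice_homs then \<phi> x else 0)"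

lemma topspace_norm_box: "topspace norm_box = {\<phi>. \<forall>x. \<phi> x \<in> {- norm x..norm x}}"
  unfolding norm_box_def by (auto simp: PiE_def Pi_def)

lemma topspace_hom_space [simp]: "topspace hom_space = lattice_homs"
proof -
  have "\<phi> \<in> topspace norm_box" if "\<phi> \<in> lattice_homs" for \<phi>
    using hom_abs_le_norm[OF that] by (simp add: topspace_norm_box abs_le_iff minus_le_iff)
  then show ?thesis
    unfolding hom_space_def by auto
qed

lemma continuous_map_norm_box_apply: "continuous_map norm_box euclideanreal (\<lambda>\<phi>. \<phi> x)"
proof -
  have "continuous_map norm_box (subtopology euclideanreal {- norm x..norm x}) (\<lambda>\<phi>. \<phi> x)"
    unfolding norm_box_def by (rule continuous_map_product_projection) simp
  then show ?thesis
    by (simp add: continuous_map_in_subtopology)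
qed

lemma closedin_lattice_homs: "closedin norm_box lattice_homs"
proof -
  have closed_eq: "closedin norm_box {\<phi> \<in> topspace norm_box. f \<phi> = h \<phi>}"
    if "continuous_map norm_box euclideanreal f" "continuous_map norm_box euclideanreal h" for f h
    using closedin_continuous_maps_eq[OF Hausdorff_space_euclidean that] .
  have "lattice_homs =
      (\<Inter>x. \<Inter>y. {\<phi> \<in> topspace norm_box. \<phi> (x + y) = \<phi> x + \<phi> y}) \<inter>
      (\<Inter>c. \<Inter>x. {\<phi> \<in> topspace norm_box. \<phi> (c *\<^sub>R x) = c * \<phi> x}) \<inter>
      (\<Inter>x. \<Inter>y. {\<phi> \<in> topspace norm_box. \<phi> (sup x y) = max (\<phi> x) (\<phi> y)}) \<inter>
      {\<phi> \<in> topspace norm_box. \<phi> e = 1}"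
    using topspace_hom_space unfolding hom_space_def lattice_homs_def linear_iff by auto
  also have "closedin norm_box \<dots>"
    by (intro closedin_Int closedin_INT closed_eq continuous_map_norm_box_apply continuous_intros) auto
  finally show ?thesis .
qed

lemma compact_space_hom_space: "compact_space hom_space"
proof -
  have "compact_space (subtopology euclideanreal {- norm x..norm x})" for x
    by (rule compact_space_subtopology) (simp add: compactin_euclidean_iff)
  then have "compact_space norm_box"
    unfolding norm_box_def compact_space_product_topology by blast
  then show ?thesis
    unfolding hom_space_def
    by (intro compact_space_subtopology closedin_compact_space closedin_lattice_homs)
qed

lemma Hausdorff_space_hom_space: "Hausdorff_space hom_space"
proof -
  have "Hausdorff_space norm_box"
    unfolding norm_box_def Hausdorff_space_product_topology
    by (simp add: Hausdorff_space_subtopology)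
  then show ?thesis
    unfolding hom_space_def by (rule Hausdorff_space_subtopology)
qed

lemma continuous_map_hom_space_apply: "continuous_map hom_space euclideanreal (\<lambda>\<phi>. \<phi> x)"
  unfolding hom_space_def by (rule continuous_map_from_subtopology[OF continuous_map_norm_box_apply])

lemma evaluation_in_CK: "evaluation x \<in> CK hom_space"
  unfolding CK_def
proof (intro CollectI conjI allI impI)
  show "continuous_map hom_space euclideanreal (evaluation x)"
    by (rule continuous_map_eq[OF continuous_map_hom_space_apply[of x]]) (simp add: evaluation_def)
  show "evaluation x \<phi> = 0" if "\<phi> \<notin> topspace hom_space" for \<phi>
    using that by (simp add: evaluation_def)
qed

lemma exists_hom_norming:
  obtains \<phi> where "\<phi> \<in> lattice_homs" "\<bar>\<phi> x\<bar> = norm x"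
proof (cases "x = 0")
  case True
  obtain \<phi> where "\<phi> \<in> lattice_homs"
    using lattice_hom_exists[OF unit_nonneg norm_unit] by blast
  with True show thesis
    using that linear_0[OF hom_linear] by auto
next
  case False
  define y where "y = (1 / norm x) *\<^sub>R lmod x"
  have "0 \<le> y" "norm y = 1"
    unfolding y_def using False lmod_nonneg[of x] banach_lattice_norm_lmod[OF banach_lattice, of x]
    by (simp_all add: scaleR_nonneg_nonneg)
  then obtain \<phi> where \<phi>: "\<phi> \<in> lattice_homs" "\<phi> y = 1"
    by (rule lattice_hom_exists)
  have "\<phi> y = \<bar>\<phi> x\<bar> / norm x"
    unfolding y_def by (simp add: linear_scale[OF hom_linear[OF \<phi>(1)]] hom_lmod[OF \<phi>(1)])
  with \<phi> False have "\<bar>\<phi> x\<bar> = norm x"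
    by simp
  with \<phi>(1) show thesis
    by (rule that)
qed

lemma CK_norm_evaluation: "CK_norm hom_space (evaluation x) = norm x"
proof -
  obtain \<phi> where \<phi>: "\<phi> \<in> lattice_homs" "\<bar>\<phi> x\<bar> = norm x"
    by (rule exists_hom_norming)
  have "(SUP \<psi>\<in>lattice_homs. \<bar>evaluation x \<psi>\<bar>) = norm x"
  proof (rule cSup_eq_maximum)
    show "norm x \<in> (\<lambda>\<psi>. \<bar>evaluation x \<psi>\<bar>) ` lattice_homs"
      using \<phi> by (intro image_eqI[of _ _ \<phi>]) (simp_all add: evaluation_def)
    show "r \<le> norm x" if "r \<in> (\<lambda>\<psi>. \<bar>evaluation x \<psi>\<bar>) ` lattice_homs" for r
      using that hom_abs_le_norm by (auto simp: evaluation_def)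
  qed
  with \<phi>(1) show ?thesis
    unfolding CK_norm_def by auto
qed

lemma inj_evaluation: "inj evaluation"
proof (rule injI)
  fix x z
  assume eq: "evaluation x = evaluation z"
  obtain \<phi> where \<phi>: "\<phi> \<in> lattice_homs" "\<bar>\<phi> (x - z)\<bar> = norm (x - z)"
    by (rule exists_hom_norming)
  have "\<phi> x = \<phi> z"
    using fun_cong[OF eq, of \<phi>] \<phi>(1) by (simp add: evaluation_def)
  then have "norm (x - z) = 0"
    using \<phi> linear_diff[OF hom_linear[OF \<phi>(1)]] by simp
  then show "x = z"
    by simp
qed

lemma lattice_homs_interpolate:
  assumes "s \<in> lattice_homs" "t \<in> lattice_homs" "s \<noteq> t"
  obtains x where "s x = a" "t x = b"
proof -
  obtain z where z: "s z \<noteq> t z"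
    using assms(3) by blast
  define \<alpha> where "\<alpha> = (a - b) / (s z - t z)"
  define x where "x = \<alpha> *\<^sub>R z + (a - \<alpha> * s z) *\<^sub>R e"
  have "s x = a" "t x = \<alpha> * (t z - s z) + a"
    using assms(1,2) unfolding x_def
    by (simp_all add: linear_add[OF hom_linear] linear_scale[OF hom_linear] hom_unit
        right_diff_distrib)
  moreover have "\<alpha> * (t z - s z) = b - a"
    using z unfolding \<alpha>_def by (simp add: field_simps)
  ultimately show thesis
    by (intro that) simp_all
qed

lemma evaluation_approximates:
  assumes g: "g \<in> CK hom_space" and "0 < \<epsilon>"
  shows "\<exists>x. \<forall>\<phi>\<in>lattice_homs. \<bar>\<phi> x - g \<phi>\<bar> < \<epsilon>"
proof -
  have g_cont: "continuous_map hom_space euclideanreal g"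
    using g by (simp add: CK_def)
  have max: "(\<lambda>\<phi>. max (evaluation x \<phi>) (evaluation z \<phi>)) = evaluation (sup x z)" for x z
    by (auto simp: evaluation_def hom_sup fun_eq_iff)
  have min: "(\<lambda>\<phi>. min (evaluation x \<phi>) (evaluation z \<phi>)) = evaluation (inf x z)" for x z
    by (auto simp: evaluation_def hom_inf fun_eq_iff)
  have interpolates: "\<exists>h\<in>range evaluation. h s = g s \<and> h t = g t"
    if st: "s \<in> lattice_homs" "t \<in> lattice_homs" for s t
  proof (cases "s = t")
    case True
    have "evaluation (g s *\<^sub>R e) s = g s"
      using st linear_scale[OF hom_linear[OF st(1)]] hom_unit[OF st(1)]
      by (simp add: evaluation_def)
    with True show ?thesis
      by blast
  next
    case False
    then obtain x where "s x = g s" "t x = g t"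
      by (rule lattice_homs_interpolate[OF st])
    then show ?thesis
      using st by (intro bexI[of _ "evaluation x"]) (simp_all add: evaluation_def)
  qed
  obtain \<phi>0 where "\<phi>0 \<in> lattice_homs"
    by (rule exists_hom_norming)
  then have nonempty: "topspace hom_space \<noteq> {}"
    by auto
  have continuous: "continuous_map hom_space euclideanreal h" if "h \<in> range evaluation" for h
    using that evaluation_in_CK by (auto simp: CK_def)
  have max_closed: "(\<lambda>\<phi>. max (f \<phi>) (h \<phi>)) \<in> range evaluation"
    if "f \<in> range evaluation" "h \<in> range evaluation" for f h
    using that by (auto simp: max)
  have min_closed: "(\<lambda>\<phi>. min (f \<phi>) (h \<phi>)) \<in> range evaluation"
    if "f \<in> range evaluation" "h \<in> range evaluation" for f h
    using that by (auto simp: min)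
  obtain h where h: "h \<in> range evaluation"
    "\<And>\<phi>. \<phi> \<in> topspace hom_space \<Longrightarrow> \<bar>h \<phi> - g \<phi>\<bar> < \<epsilon>"
    by (rule lattice_Stone_Weierstrass[OF compact_space_hom_space nonempty continuous max_closed
          min_closed g_cont interpolates assms(2)]) auto
  then obtain x where "h = evaluation x"
    by blast
  with h(2) show ?thesis
    by (intro exI[of _ x]) (auto simp: evaluation_def)
qed

text \<open>Since every \<open>x\<close> is normed by a homomorphism, uniform approximation on the
  homomorphisms is approximation in norm; completeness then provides the limit.\<close>

lemma uniform_limit_on_homs:
  assumes xs: "\<forall>n. \<forall>\<phi>\<in>lattice_homs. \<bar>\<phi> (xs n) - g \<phi>\<bar> < inverse (real (Suc n))"
  shows "\<exists>x. \<forall>\<phi>\<in>lattice_homs. \<phi> x = g \<phi>"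
proof -
  have dist: "norm (xs m - xs n) < inverse (real (Suc m)) + inverse (real (Suc n))" for m n
  proof -
    obtain \<phi> where \<phi>: "\<phi> \<in> lattice_homs" "\<bar>\<phi> (xs m - xs n)\<bar> = norm (xs m - xs n)"
      by (rule exists_hom_norming)
    have "\<bar>\<phi> (xs m) - g \<phi>\<bar> < inverse (real (Suc m))" "\<bar>\<phi> (xs n) - g \<phi>\<bar> < inverse (real (Suc n))"
      using xs \<phi>(1) by blast+
    with \<phi> show ?thesis
      using linear_diff[OF hom_linear[OF \<phi>(1)], of "xs m" "xs n"] by linarith
  qed
  have "Cauchy xs"
  proof (rule CauchyI)
    fix \<epsilon> :: real
    assume "0 < \<epsilon>"
    then obtain N where N: "inverse (real (Suc N)) < \<epsilon> / 2"
      using reals_Archimedean[of "\<epsilon> / 2"] by auto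
    have "norm (xs m - xs n) < \<epsilon>" if "N \<le> m" "N \<le> n" for m n
    proof -
      have "inverse (real (Suc m)) \<le> inverse (real (Suc N))"
        "inverse (real (Suc n)) \<le> inverse (real (Suc N))"
        using that by (simp_all add: le_imp_inverse_le)
      then show ?thesis
        using dist[of m n] N by linarith
    qed
    then show "\<exists>M. \<forall>m\<ge>M. \<forall>n\<ge>M. norm (xs m - xs n) < \<epsilon>"
      by blast
  qed
  then obtain x where lim: "xs \<longlonglongrightarrow> x"
    using Cauchy_convergent_iff convergent_def by blast
  have "\<phi> x = g \<phi>" if \<phi>: "\<phi> \<in> lattice_homs" for \<phi>
  proof (rule LIMSEQ_unique)
    show "(\<lambda>n. \<phi> (xs n)) \<longlonglongrightarrow> \<phi> x"
      by (rule bounded_linear.tendsto[OF hom_bounded_linear[OF \<phi>] lim])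
    have "(\<lambda>n. \<phi> (xs n) - g \<phi>) \<longlonglongrightarrow> 0"
      by (rule Lim_null_comparison[OF always_eventually LIMSEQ_inverse_real_of_nat])
        (use xs \<phi> in \<open>simp add: less_imp_le\<close>)
    then show "(\<lambda>n. \<phi> (xs n)) \<longlonglongrightarrow> g \<phi>"
      by (simp add: LIM_zero_iff)
  qed
  then show ?thesis
    by blast
qed

lemma evaluation_surj:
  assumes g: "g \<in> CK hom_space"
  obtains x where "evaluation x = g"
proof -
  have "\<forall>n. \<exists>x. \<forall>\<phi>\<in>lattice_homs. \<bar>\<phi> x - g \<phi>\<bar> < inverse (real (Suc n))"
  proof
    fix n
    show "\<exists>x. \<forall>\<phi>\<in>lattice_homs. \<bar>\<phi> x - g \<phi>\<bar> < inverse (real (Suc n))"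
      by (rule evaluation_approximates[OF g]) simp
  qed
  from choice[OF this] obtain xs
    where "\<forall>n. \<forall>\<phi>\<in>lattice_homs. \<bar>\<phi> (xs n) - g \<phi>\<bar> < inverse (real (Suc n))" ..
  then obtain x where "\<forall>\<phi>\<in>lattice_homs. \<phi> x = g \<phi>"
    using uniform_limit_on_homs by blast
  then have "evaluation x = g"
    using g by (auto simp: evaluation_def CK_def fun_eq_iff)
  then show thesis
    by (rule that)
qed

theorem lattice_isometry_evaluation: "lattice_isometry_onto_CK evaluation hom_space"
  unfolding lattice_isometry_onto_CK_def
proof (intro conjI allI)
  have "range evaluation = CK hom_space"
  proof
    show "range evaluation \<subseteq> CK hom_space"
      using evaluation_in_CK by blast
    show "CK hom_space \<subseteq> range evaluation"
    proof
      fix g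
      assume "g \<in> CK hom_space"
      then obtain x where "evaluation x = g"
        by (rule evaluation_surj)
      then show "g \<in> range evaluation"
        by blast
    qed
  qed
  then show "bij_betw evaluation UNIV (CK hom_space)"
    using inj_evaluation by (simp add: bij_betw_def)
  fix x y :: 'a and \<phi> :: "'a \<Rightarrow> real" and c :: real
  show "evaluation (x + y) \<phi> = evaluation x \<phi> + evaluation y \<phi>"
    "evaluation (c *\<^sub>R x) \<phi> = c * evaluation x \<phi>"
    by (simp_all add: evaluation_def linear_add[OF hom_linear] linear_scale[OF hom_linear])
  show "evaluation (sup x y) \<phi> = max (evaluation x \<phi>) (evaluation y \<phi>)"
    "evaluation (inf x y) \<phi> = min (evaluation x \<phi>) (evaluation y \<phi>)"
    by (simp_all add: evaluation_def hom_sup hom_inf)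
next
  show "CK_norm hom_space (evaluation x) = norm x" for x
    by (rule CK_norm_evaluation)
qed

end

theorem mainTheorem16:
  assumes "AM_space TYPE('a::{banach,ordered_real_vector,lattice})"
    and "separable_type TYPE('a)"
    and "\<forall>f::'a \<Rightarrow> real. positive_dual f \<longrightarrow> attains_norm f"
  shows "\<exists>(K::('a \<Rightarrow> real) topology) (\<Phi>::'a \<Rightarrow> ('a \<Rightarrow> real) \<Rightarrow> real).
           compact_space K \<and> Hausdorff_space K \<and> lattice_isometry_onto_CK \<Phi> K"
proof -
  have BL: "banach_lattice TYPE('a)"
    using assms(1) by (simp add: AM_space_def)
  obtain F :: "'a \<Rightarrow> real" where F: "bounded_linear F" "\<And>y. 0 \<le> y \<Longrightarrow> y \<noteq> 0 \<Longrightarrow> 0 < F y"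
    using strictly_positive_functional_exists[OF BL assms(2)] by blast
  have "0 \<le> F y" if "0 \<le> y" for y
    using F(2)[OF that] linear_0[OF bounded_linear.linear[OF F(1)]] by (cases "y = 0") auto
  with F(1) have "attains_norm F"
    using assms(3) by (simp add: positive_dual_def)
  then obtain e :: 'a where "norm e = 1" "\<And>y. lmod y \<le> norm y *\<^sub>R e"
    using AM_space_order_unit[OF assms(1) F] by blast
  with BL interpret AM_unit e
    by unfold_locales
  show ?thesis
    using compact_space_hom_space Hausdorff_space_hom_space lattice_isometry_evaluation by blast
qed

end
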